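(* Let $M$ be the metric space \[M:=\Big\{\Big(a,\tfrac{1}{2^{n}}\Big)\colon a\in[0,1],\ n\in\mathbb{N}\Big\}\cup \Big\{(a,b)\colon a\in\{0,1\},\ b\in\Big[0,\tfrac{1}{2}\Big]\Big\}\subseteq\mathbb{R}^2\] with the metric \[d\big((a,b),(c,e)\big):=\begin{cases} |a-c|, & \text{if }b=e,\\ \min\{a+c,\,2-a-c\}+|b-e|, &\text{if } b\neq e, \end{cases}\] and base point $(0,0)$. Let $x=(0,0)$ and $y=(1,0)$. For every $\varepsilon\in(0,1)$ and every $\mu\in B_{\mathcal{F}(M)}$, if \[\|m_{xy}\pm \mu\|<1+\varepsilon^{2}/64\quad\text{and}\quad \|\mu\|> 1-\varepsilon^{2}/64,\] then there exist $\delta>0$ and $\nu\in\operatorname{conv}\big(\mathrm{Mol}_{\delta,\varepsilon}(M)\big)$ such that $\|\mu-\nu\|<\varepsilon$.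
   Context: For a pointed metric space $(M,d,0)$, $\mathrm{Lip}_0(M)$ is the Banach space of Lipschitz functions $f\colon M\to\mathbb{R}$ with $f(0)=0$, normed by the best Lipschitz constant. The Lipschitz-free space $\mathcal{F}(M)$ is the norm-closed linear span of the evaluation functionals $\delta_u$ ($\delta_u(f)=f(u)$), $u\in M$, in $\mathrm{Lip}_0(M)^*$. For $u\neq v$ in $M$, the molecule is $m_{uv}=(\delta_u-\delta_v)/d(u,v)$. With $\pi_2(a,b)=b$, for $\delta,\varepsilon>0$ set $\mathrm{Mol}_{\delta,\varepsilon}(M)=\{m_{uv}\colon u,v\in M,\ u\neq v,\ \delta<\pi_2(u)<\varepsilon,\ \delta<\pi_2(v)<\varepsilon\}$; $\operatorname{conv}$ denotes the convex hull. $B_X$ is the closed unit ball; $\mathbb{N}=\{1,2,\dots\}$. *)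

theory Defs
  imports "HOL-Analysis.Analysis"
begin

definition Mset :: "(real \<times> real) set" where
  "Mset = {(a, 1 / 2 ^ n) | a n. a \<in> {0..1} \<and> n \<ge> (1::nat)}
        \<union> {(a, b) | a b. a \<in> {0, 1} \<and> b \<in> {0..1/2}}"

definition dM :: "real \<times> real \<Rightarrow> real \<times> real \<Rightarrow> real" where
  "dM p q = (if snd p = snd q then \<bar>fst p - fst q\<bar>
             else min (fst p + fst q) (2 - fst p - fst q) + \<bar>snd p - snd q\<bar>)"

definition basept :: "real \<times> real" where "basept = (0, 0)"

text \<open>Functions are taken to vanish off M (extensional representatives).\<close>
definition Lip0 :: "(real \<times> real \<Rightarrow> real) set" where
  "Lip0 = {f. f basept = 0 \<and> (\<forall>p. p \<notin> Mset \<longrightarrow> f p = 0) \<and>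
              (\<exists>L. \<forall>u\<in>Mset. \<forall>v\<in>Mset. \<bar>f u - f v\<bar> \<le> L * dM u v)}"

definition Lip0_ball :: "(real \<times> real \<Rightarrow> real) set" where
  "Lip0_ball = {f \<in> Lip0. \<forall>u\<in>Mset. \<forall>v\<in>Mset. \<bar>f u - f v\<bar> \<le> dM u v}"

definition fnorm :: "((real \<times> real \<Rightarrow> real) \<Rightarrow> real) \<Rightarrow> real" where
  "fnorm \<phi> = Sup {\<bar>\<phi> f\<bar> | f. f \<in> Lip0_ball}"

text \<open>Lipschitz-free space: the norm closure of the span of the evaluation functionals.\<close>
definition FreeSp :: "((real \<times> real \<Rightarrow> real) \<Rightarrow> real) set" where
  "FreeSp = {\<phi>. \<forall>e>0. \<exists>(n::nat) (c::nat \<Rightarrow> real) (p::nat \<Rightarrow> real \<times> real).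
                 (\<forall>i<n. p i \<in> Mset) \<and>
                 fnorm (\<lambda>f. \<phi> f - (\<Sum>i<n. c i * f (p i))) < e}"

definition mol :: "real \<times> real \<Rightarrow> real \<times> real \<Rightarrow> (real \<times> real \<Rightarrow> real) \<Rightarrow> real" where
  "mol u v = (\<lambda>f. (f u - f v) / dM u v)"

definition Mol :: "real \<Rightarrow> real \<Rightarrow> ((real \<times> real \<Rightarrow> real) \<Rightarrow> real) set" where
  "Mol \<delta> \<epsilon> = {mol u v | u v. u \<in> Mset \<and> v \<in> Mset \<and> u \<noteq> v \<and>
                   \<delta> < snd u \<and> snd u < \<epsilon> \<and> \<delta> < snd v \<and> snd v < \<epsilon>}"

definition convF :: "((real \<times> real \<Rightarrow> real) \<Rightarrow> real) set \<Rightarrow> ((real \<times> real \<Rightarrow> real) \<Rightarrow> real) set" where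
  "convF A = {\<nu>. \<exists>(n::nat) (w::nat \<Rightarrow> real) g. (\<forall>i<n. 0 \<le> w i \<and> g i \<in> A) \<and>
                 (\<Sum>i<n. w i) = 1 \<and> \<nu> = (\<lambda>f. \<Sum>i<n. w i * g i f)}"

end

(* Since m_xy + mu and m_xy - mu both have norm close to 1, mu nearly vanishes on every f in the
   unit ball with f(y) = -1. A function k of the ball vanishing below a level t is a multiple
   of the difference of two such functions (clamps of k between -(a + b) and b - a), so mu nearly
   vanishes on k as well; applied to f minus its truncation f(a, min b t), this shows that mu is
   close to its push-forward under the truncation. Hence mu is close to a finitely supported
   element psi living on the levels between some s > 0 and t < eps. By Kantorovich duality on the
   finite support of psi (a Hahn-Banach argument followed by a McShane extension), psi is a
   combination of molecules of total weight close to its norm, which is close to 1; normalising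
   it gives the required element of conv Mol. *)

theory Submission
  imports Defs
begin

lemma Mset_coord_bounds:
  assumes "p \<in> Mset"
  shows "0 \<le> fst p" "fst p \<le> 1" "0 \<le> snd p" "snd p \<le> 1/2"
    and "snd p = 0 \<Longrightarrow> fst p = 0 \<or> fst p = 1"
proof -
  have "(1::real) / 2 ^ n \<le> 1/2" if "n \<ge> 1" for n :: nat
  proof -
    have "(2::real) ^ 1 \<le> 2 ^ n" using that by (intro power_increasing) auto
    then show ?thesis by (simp add: field_simps)
  qed
  then show "0 \<le> fst p" "fst p \<le> 1" "0 \<le> snd p" "snd p \<le> 1/2"
    and "snd p = 0 \<Longrightarrow> fst p = 0 \<or> fst p = 1"
    using assms unfolding Mset_def by (auto; fastforce)+
qed

lemma zero_in_Mset: "(0, 0) \<in> Mset"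
  and one_zero_in_Mset: "(1, 0) \<in> Mset"
  unfolding Mset_def by auto

lemma dM_commute: "dM p q = dM q p"
  unfolding dM_def by (auto simp: min_def abs_if)

lemma dM_self [simp]: "dM p p = 0"
  unfolding dM_def by simp

lemma dM_triangle:
  assumes "p \<in> Mset" "q \<in> Mset" "r \<in> Mset"
  shows "dM p r \<le> dM p q + dM q r"
  using Mset_coord_bounds[OF assms(1)] Mset_coord_bounds[OF assms(2)] Mset_coord_bounds[OF assms(3)]
  unfolding dM_def by (auto simp: min_def abs_if split: if_splits)

lemma dM_pos:
  assumes "p \<in> Mset" "q \<in> Mset" "p \<noteq> q"
  shows "0 < dM p q"
  using Mset_coord_bounds[OF assms(1)] Mset_coord_bounds[OF assms(2)] assms(3)
  unfolding dM_def by (cases p; cases q; auto simp: min_def)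

lemma dM_nonneg: "p \<in> Mset \<Longrightarrow> q \<in> Mset \<Longrightarrow> 0 \<le> dM p q"
  using dM_pos[of p q] by (cases "p = q") auto

lemma dM_to_origin: "p \<in> Mset \<Longrightarrow> dM p (0, 0) = fst p + snd p"
  using Mset_coord_bounds[of p] unfolding dM_def by (cases p) (auto simp: min_def)

lemma dM_origin_one_zero: "dM (0, 0) (1, 0) = 1"
  unfolding dM_def by simp

lemma
  assumes "p \<in> Mset" "q \<in> Mset"
  shows abs_fst_diff_le_dM: "\<bar>fst p - fst q\<bar> \<le> dM p q"
    and abs_fst_add_snd_diff_le_dM: "\<bar>(fst p + snd p) - (fst q + snd q)\<bar> \<le> dM p q"
    and abs_snd_sub_fst_diff_le_dM: "\<bar>(snd p - fst p) - (snd q - fst q)\<bar> \<le> dM p q"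
  using Mset_coord_bounds[OF assms(1)] Mset_coord_bounds[OF assms(2)]
  unfolding dM_def by (auto simp: min_def abs_if)

section \<open>The unit ball of Lip_0(M) and the dual norm\<close>

lemma Lip0_ball_lipschitz: "f \<in> Lip0_ball \<Longrightarrow> u \<in> Mset \<Longrightarrow> v \<in> Mset \<Longrightarrow> \<bar>f u - f v\<bar> \<le> dM u v"
  unfolding Lip0_ball_def by auto

lemma Lip0_ball_origin: "f \<in> Lip0_ball \<Longrightarrow> f (0, 0) = 0"
  unfolding Lip0_ball_def Lip0_def basept_def by auto

lemma Lip0_ball_outside: "f \<in> Lip0_ball \<Longrightarrow> p \<notin> Mset \<Longrightarrow> f p = 0"
  unfolding Lip0_ball_def Lip0_def by blast

lemma Lip0_ballI:
  assumes "f (0, 0) = 0" "\<And>p. p \<notin> Mset \<Longrightarrow> f p = 0"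
    and "\<And>u v. u \<in> Mset \<Longrightarrow> v \<in> Mset \<Longrightarrow> \<bar>f u - f v\<bar> \<le> dM u v"
  shows "f \<in> Lip0_ball"
proof -
  have "\<forall>u\<in>Mset. \<forall>v\<in>Mset. \<bar>f u - f v\<bar> \<le> 1 * dM u v" using assms(3) by auto
  then show ?thesis unfolding Lip0_ball_def Lip0_def basept_def using assms by blast
qed

lemma zero_in_Lip0_ball: "(\<lambda>p. 0) \<in> Lip0_ball"
  by (rule Lip0_ballI) (auto intro: dM_nonneg)

lemma uminus_in_Lip0_ball: "f \<in> Lip0_ball \<Longrightarrow> (\<lambda>p. - f p) \<in> Lip0_ball"
  by (rule Lip0_ballI) (auto simp: Lip0_ball_origin Lip0_ball_outside abs_minus_commute
      dest: Lip0_ball_lipschitz)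

lemma half_diff_in_Lip0_ball:
  assumes f: "f \<in> Lip0_ball" and g: "g \<in> Lip0_ball"
  shows "(\<lambda>p. (1/2) * f p + (-1/2) * g p) \<in> Lip0_ball"
proof (rule Lip0_ballI)
  fix u v assume "u \<in> Mset" "v \<in> Mset"
  then have "\<bar>f u - f v\<bar> \<le> dM u v" "\<bar>g u - g v\<bar> \<le> dM u v"
    using Lip0_ball_lipschitz f g by auto
  then show "\<bar>((1/2) * f u + (-1/2) * g u) - ((1/2) * f v + (-1/2) * g v)\<bar> \<le> dM u v"
    by (simp add: abs_le_iff; linarith)
qed (use Lip0_ball_origin[OF f] Lip0_ball_origin[OF g] Lip0_ball_outside[OF f]
       Lip0_ball_outside[OF g] in auto)

lemma Lip0_ball_abs_le: "f \<in> Lip0_ball \<Longrightarrow> u \<in> Mset \<Longrightarrow> \<bar>f u\<bar> \<le> fst u + snd u"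
  using Lip0_ball_lipschitz[of f u "(0, 0)"] Lip0_ball_origin[of f] dM_to_origin[of u] zero_in_Mset
  by auto

lemma Lip0_ball_abs_le_2: "f \<in> Lip0_ball \<Longrightarrow> \<bar>f u\<bar> \<le> 2"
  using Lip0_ball_abs_le[of f u] Mset_coord_bounds[of u] Lip0_ball_outside[of f u]
  by (cases "u \<in> Mset") auto

definition ball_bounded :: "((real \<times> real \<Rightarrow> real) \<Rightarrow> real) \<Rightarrow> bool" where
  "ball_bounded \<phi> \<longleftrightarrow> bdd_above {\<bar>\<phi> f\<bar> | f. f \<in> Lip0_ball}"

lemma ball_boundedI: "(\<And>f. f \<in> Lip0_ball \<Longrightarrow> \<bar>\<phi> f\<bar> \<le> B) \<Longrightarrow> ball_bounded \<phi>"
  unfolding ball_bounded_def bdd_above_def by blast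

lemma ball_boundedE:
  assumes "ball_bounded \<phi>"
  obtains B where "\<And>f. f \<in> Lip0_ball \<Longrightarrow> \<bar>\<phi> f\<bar> \<le> B"
  using assms unfolding ball_bounded_def bdd_above_def by blast

lemma ball_bounded_add: "ball_bounded \<phi> \<Longrightarrow> ball_bounded \<psi> \<Longrightarrow> ball_bounded (\<lambda>f. \<phi> f + \<psi> f)"
  by (elim ball_boundedE, rule ball_boundedI, rule order.trans[OF abs_triangle_ineq])
    (rule add_mono)

lemma ball_bounded_diff: "ball_bounded \<phi> \<Longrightarrow> ball_bounded \<psi> \<Longrightarrow> ball_bounded (\<lambda>f. \<phi> f - \<psi> f)"
  by (elim ball_boundedE, rule ball_boundedI, rule order.trans[OF abs_triangle_ineq4])
    (rule add_mono)

lemma ball_bounded_point_comb: "ball_bounded (\<lambda>f. \<Sum>i<n. c i * f (p i))"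
proof (rule ball_boundedI)
  fix f assume f: "f \<in> Lip0_ball"
  have "\<bar>\<Sum>i<n. c i * f (p i)\<bar> \<le> (\<Sum>i<n. \<bar>c i\<bar> * \<bar>f (p i)\<bar>)"
    by (rule order.trans[OF sum_abs]) (simp add: abs_mult)
  also have "\<dots> \<le> (\<Sum>i<n. \<bar>c i\<bar> * 2)"
    by (intro sum_mono mult_left_mono Lip0_ball_abs_le_2[OF f]) auto
  finally show "\<bar>\<Sum>i<n. c i * f (p i)\<bar> \<le> (\<Sum>i<n. \<bar>c i\<bar> * 2)" .
qed

lemma abs_le_fnorm: "ball_bounded \<phi> \<Longrightarrow> f \<in> Lip0_ball \<Longrightarrow> \<bar>\<phi> f\<bar> \<le> fnorm \<phi>"
  unfolding fnorm_def ball_bounded_def by (rule cSup_upper) auto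

lemma fnorm_le: "(\<And>f. f \<in> Lip0_ball \<Longrightarrow> \<bar>\<phi> f\<bar> \<le> c) \<Longrightarrow> fnorm \<phi> \<le> c"
  unfolding fnorm_def by (rule cSup_least) (use zero_in_Lip0_ball in auto)

lemma fnorm_gt_witness: "c < fnorm \<phi> \<Longrightarrow> \<exists>f\<in>Lip0_ball. c < \<bar>\<phi> f\<bar>"
  using fnorm_le[of \<phi> c] by force

text \<open>For an unbounded functional, \<open>fnorm\<close> is the junk value \<open>Sup\<close> of a set that is not
  bounded above; it is the same junk value for all unbounded functionals.\<close>
lemma fnorm_unbounded_eq:
  assumes "\<not> ball_bounded \<phi>" "\<not> ball_bounded \<psi>"
  shows "fnorm \<phi> = fnorm \<psi>"
proof -
  have "(\<lambda>z. \<forall>x\<in>{\<bar>\<phi> f\<bar> | f. f \<in> Lip0_ball}. x \<le> z) = (\<lambda>z. \<forall>x\<in>{\<bar>\<psi> f\<bar> | f. f \<in> Lip0_ball}. x \<le> z)"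
    using assms unfolding ball_bounded_def bdd_above_def by (intro ext) blast
  then show ?thesis unfolding fnorm_def Sup_real_def by simp
qed

lemma FreeSp_approx:
  assumes "\<mu> \<in> FreeSp" "0 < e"
  obtains n :: nat and c p where "\<forall>i<n. p i \<in> Mset" "fnorm (\<lambda>f. \<mu> f - (\<Sum>i<n. c i * f (p i))) < e"
  using assms unfolding FreeSp_def mem_Collect_eq by blast

lemma FreeSp_ball_bounded:
  assumes "\<mu> \<in> FreeSp" "0 < fnorm \<mu>"
  shows "ball_bounded \<mu>"
proof (rule ccontr)
  assume unbounded: "\<not> ball_bounded \<mu>"
  obtain n :: nat and c p where approx: "fnorm (\<lambda>f. \<mu> f - (\<Sum>i<n. c i * f (p i))) < fnorm \<mu>"
    using FreeSp_approx[OF assms] by blast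
  have "\<not> ball_bounded (\<lambda>f. \<mu> f - (\<Sum>i<n. c i * f (p i)))"
  proof
    assume "ball_bounded (\<lambda>f. \<mu> f - (\<Sum>i<n. c i * f (p i)))"
    from ball_bounded_add[OF this ball_bounded_point_comb[where n = n and c = c and p = p]]
    show False using unbounded by simp
  qed
  with approx show False using fnorm_unbounded_eq[OF unbounded] by simp
qed

lemma FreeSp_approx_on_ball:
  assumes "\<mu> \<in> FreeSp" "ball_bounded \<mu>" "0 < e"
  obtains n :: nat and c p
  where "\<forall>i<n. p i \<in> Mset" "\<forall>f\<in>Lip0_ball. \<bar>\<mu> f - (\<Sum>i<n. c i * f (p i))\<bar> < e"
proof -
  obtain n :: nat and c p where p: "\<forall>i<n. p i \<in> Mset"
    and lt: "fnorm (\<lambda>f. \<mu> f - (\<Sum>i<n. c i * f (p i))) < e"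
    using FreeSp_approx[OF assms(1,3)] by blast
  have "ball_bounded (\<lambda>f. \<mu> f - (\<Sum>i<n. c i * f (p i)))"
    by (rule ball_bounded_diff[OF assms(2) ball_bounded_point_comb])
  then have "\<forall>f\<in>Lip0_ball. \<bar>\<mu> f - (\<Sum>i<n. c i * f (p i))\<bar> < e"
    using abs_le_fnorm lt by fastforce
  with p that show ?thesis by blast
qed

lemma FreeSp_linear_on_ball:
  assumes "\<mu> \<in> FreeSp" "ball_bounded \<mu>" "f \<in> Lip0_ball" "g \<in> Lip0_ball"
    and "(\<lambda>p. \<alpha> * f p + \<beta> * g p) \<in> Lip0_ball"
  shows "\<mu> (\<lambda>p. \<alpha> * f p + \<beta> * g p) = \<alpha> * \<mu> f + \<beta> * \<mu> g"
proof -
  let ?h = "\<lambda>p. \<alpha> * f p + \<beta> * g p"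
  let ?D = "\<bar>\<mu> ?h - (\<alpha> * \<mu> f + \<beta> * \<mu> g)\<bar>"
  let ?K = "1 + \<bar>\<alpha>\<bar> + \<bar>\<beta>\<bar>"
  have K: "0 < ?K" by (simp add: add_pos_nonneg)
  have "?D \<le> e" if "0 < e" for e
  proof -
    obtain n :: nat and c p where approx: "\<forall>f\<in>Lip0_ball. \<bar>\<mu> f - (\<Sum>i<n. c i * f (p i))\<bar> < e / ?K"
      using FreeSp_approx_on_ball[OF assms(1,2)] \<open>0 < e\<close> K by (metis divide_pos_pos)
    define \<phi> where "\<phi> f = (\<Sum>i<n. c i * f (p i))" for f :: "real \<times> real \<Rightarrow> real"
    have err: "\<bar>\<mu> k - \<phi> k\<bar> \<le> e / ?K" if "k \<in> Lip0_ball" for k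
      using approx that unfolding \<phi>_def by (simp add: less_imp_le)
    have "\<phi> ?h = \<alpha> * \<phi> f + \<beta> * \<phi> g"
      unfolding \<phi>_def by (simp add: sum_distrib_left sum.distrib algebra_simps)
    then have "?D = \<bar>(\<mu> ?h - \<phi> ?h) - \<alpha> * (\<mu> f - \<phi> f) - \<beta> * (\<mu> g - \<phi> g)\<bar>"
      by (simp add: algebra_simps)
    also have "\<dots> \<le> \<bar>\<mu> ?h - \<phi> ?h\<bar> + \<bar>\<alpha>\<bar> * \<bar>\<mu> f - \<phi> f\<bar> + \<bar>\<beta>\<bar> * \<bar>\<mu> g - \<phi> g\<bar>"
      unfolding abs_mult[symmetric] by (rule abs_triangle_ineq4[THEN order.trans]) linarith
    also have "\<dots> \<le> e / ?K + \<bar>\<alpha>\<bar> * (e / ?K) + \<bar>\<beta>\<bar> * (e / ?K)"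
      by (intro add_mono mult_left_mono err assms(3-5)) simp_all
    also have "\<dots> = ?K * (e / ?K)" by (simp add: algebra_simps add_divide_distrib)
    also have "\<dots> = e" using K by simp
    finally show ?thesis .
  qed
  then have "?D \<le> 0" by (rule field_le_epsilon[where y = 0, simplified])
  then show ?thesis by simp
qed

section \<open>Functionals that almost vanish where f (1, 0) = -1\<close>

lemma mol_origin_one_zero: "mol (0, 0) (1, 0) f = f (0, 0) - f (1, 0)"
  unfolding mol_def dM_origin_one_zero by simp

lemma ball_bounded_mol_origin_one_zero: "ball_bounded (mol (0, 0) (1, 0))"
  using Lip0_ball_lipschitz[OF _ zero_in_Mset one_zero_in_Mset]
  by (intro ball_boundedI[where B = 1]) (simp add: mol_origin_one_zero dM_origin_one_zero)

lemma abs_lt_of_fnorm_add_diff_lt: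
  assumes "ball_bounded \<phi>" "ball_bounded \<mu>" "g \<in> Lip0_ball" "\<phi> g = 1"
    and "fnorm (\<lambda>f. \<phi> f + \<mu> f) < 1 + \<eta>" "fnorm (\<lambda>f. \<phi> f - \<mu> f) < 1 + \<eta>"
  shows "\<bar>\<mu> g\<bar> < \<eta>"
  using abs_le_fnorm[OF ball_bounded_add[OF assms(1,2)] assms(3)]
    abs_le_fnorm[OF ball_bounded_diff[OF assms(1,2)] assms(3)] assms(4-6)
  by (simp add: abs_le_iff abs_less_iff)

text \<open>Both clamps \<open>-(a + b)\<close> and \<open>b - a\<close> are 1-Lipschitz on M and equal \<open>-1\<close> at \<open>(1, 0)\<close>.\<close>
definition clamped :: "real \<Rightarrow> (real \<times> real \<Rightarrow> real) \<Rightarrow> real \<times> real \<Rightarrow> real" where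
  "clamped l k = (\<lambda>p. if p \<in> Mset
     then max (- (fst p + snd p)) (min (snd p - fst p) ((l * k p - fst p) / (1 + l))) else 0)"

lemma clamped_one_zero: "clamped l k (1, 0) = -1"
  unfolding clamped_def using one_zero_in_Mset by simp

lemma abs_max_diff_le: "\<bar>max a b - max c d\<bar> \<le> max \<bar>a - c\<bar> \<bar>b - d\<bar>"
  and abs_min_diff_le: "\<bar>min a b - min c d\<bar> \<le> max \<bar>a - c\<bar> \<bar>b - d\<bar>" for a b c d :: real
  by (auto simp: min_def max_def abs_if)

lemma clamped_in_Lip0_ball:
  assumes l: "0 \<le> l" and k: "k \<in> Lip0_ball"
  shows "clamped l k \<in> Lip0_ball"
proof (rule Lip0_ballI)
  fix u v assume u: "u \<in> Mset" and v: "v \<in> Mset"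
  have "\<bar>l * (k u - k v)\<bar> \<le> l * dM u v"
    using Lip0_ball_lipschitz[OF k u v] l by (simp add: abs_mult mult_left_mono)
  then have "\<bar>l * (k u - k v) - (fst u - fst v)\<bar> \<le> l * dM u v + dM u v"
    by (rule order.trans[OF abs_triangle_ineq4 add_mono]) (rule abs_fst_diff_le_dM[OF u v])
  then have "\<bar>l * (k u - k v) - (fst u - fst v)\<bar> / (1 + l) \<le> dM u v"
    using l by (simp add: divide_le_eq algebra_simps)
  then have mid: "\<bar>(l * k u - fst u) / (1 + l) - (l * k v - fst v) / (1 + l)\<bar> \<le> dM u v"
    using l by (simp add: diff_divide_distrib[symmetric] abs_divide algebra_simps)
  have "\<bar>clamped l k u - clamped l k v\<bar>
      \<le> max \<bar>- (fst u + snd u) - - (fst v + snd v)\<bar>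
           (max \<bar>(snd u - fst u) - (snd v - fst v)\<bar>
                \<bar>(l * k u - fst u) / (1 + l) - (l * k v - fst v) / (1 + l)\<bar>)"
    unfolding clamped_def using u v
    by (simp del: max.absorb_iff2 max.absorb_iff1)
      (rule order.trans[OF abs_max_diff_le max.mono[OF order.refl abs_min_diff_le]])
  also have "\<dots> \<le> dM u v"
    using abs_fst_add_snd_diff_le_dM[OF u v] abs_snd_sub_fst_diff_le_dM[OF u v] mid
    by (simp add: abs_minus_commute)
  finally show "\<bar>clamped l k u - clamped l k v\<bar> \<le> dM u v" .
qed (use zero_in_Mset in \<open>auto simp: clamped_def\<close>)

text \<open>Above level \<open>5 l / 2\<close> neither clamp is active, since there \<open>l (\<bar>k p\<bar> + a) \<le> 5 l / 2 < b\<close>.\<close>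
lemma clamped_diff:
  assumes l: "0 < l" and k: "k \<in> Lip0_ball"
    and vanish: "\<And>p. p \<in> Mset \<Longrightarrow> snd p \<le> 5/2 * l \<Longrightarrow> k p = 0"
  shows "clamped l k p - clamped l (\<lambda>p. - k p) p = (2 * l / (1 + l)) * k p"
proof (cases "p \<in> Mset \<and> 5/2 * l < snd p")
  case True
  then have p: "p \<in> Mset" and above: "5/2 * l < snd p" by auto
  note P = Mset_coord_bounds[OF p]
  have "\<bar>k p\<bar> + fst p \<le> 5/2" using Lip0_ball_abs_le[OF k p] P by linarith
  then have "l * (\<bar>k p\<bar> + fst p) \<le> l * (5/2)" using l by (intro mult_left_mono) auto
  then have small: "l * \<bar>k p\<bar> + l * fst p < snd p" using above by (simp add: algebra_simps)
  have inactive: "clamped l h p = (l * h p - fst p) / (1 + l)" if "\<bar>h p\<bar> = \<bar>k p\<bar>" for h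
  proof -
    have "\<bar>l * h p\<bar> = l * \<bar>k p\<bar>" using that l by (simp add: abs_mult)
    moreover have "0 \<le> l * fst p" "0 \<le> l * snd p" using l P by simp_all
    ultimately have "- (fst p + snd p) * (1 + l) \<le> l * h p - fst p"
      "l * h p - fst p \<le> (snd p - fst p) * (1 + l)"
      using small by (simp_all add: algebra_simps abs_le_iff)
    then have "- (fst p + snd p) \<le> (l * h p - fst p) / (1 + l)"
      "(l * h p - fst p) / (1 + l) \<le> snd p - fst p"
      using l by (simp_all add: pos_le_divide_eq pos_divide_le_eq)
    then show ?thesis unfolding clamped_def using p by simp
  qed
  have "clamped l k p - clamped l (\<lambda>p. - k p) p
      = ((l * k p - fst p) - (l * - k p - fst p)) / (1 + l)"
    using inactive[of k] inactive[of "\<lambda>p. - k p"] by (simp add: diff_divide_distrib)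
  then show ?thesis by simp
next
  case False
  then have "k p = 0"
    using vanish Lip0_ball_outside[OF k] by (cases "p \<in> Mset") (auto simp: not_less)
  then show ?thesis unfolding clamped_def by simp
qed

lemma abs_le_of_vanishing_below:
  assumes \<mu>: "\<mu> \<in> FreeSp" "ball_bounded \<mu>"
    and peak: "\<And>g. g \<in> Lip0_ball \<Longrightarrow> g (1, 0) = -1 \<Longrightarrow> \<bar>\<mu> g\<bar> \<le> \<eta>"
    and l: "0 < l" and k: "k \<in> Lip0_ball"
    and vanish: "\<And>p. p \<in> Mset \<Longrightarrow> snd p \<le> 5/2 * l \<Longrightarrow> k p = 0"
  shows "\<bar>\<mu> k\<bar> \<le> \<eta> * (1 + l) / l"
proof -
  define a where "a = (1 + l) / (2 * l)"
  have a: "0 < a" unfolding a_def using l by simp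
  have g1: "clamped l k \<in> Lip0_ball" and g2: "clamped l (\<lambda>p. - k p) \<in> Lip0_ball"
    using clamped_in_Lip0_ball uminus_in_Lip0_ball k l by auto
  have "(\<lambda>p. a * clamped l k p + (- a) * clamped l (\<lambda>p. - k p) p) = k"
  proof
    fix p
    have "a * clamped l k p + (- a) * clamped l (\<lambda>p. - k p) p = a * (2 * l / (1 + l)) * k p"
      using clamped_diff[OF l k vanish] by (simp add: algebra_simps)
    also have "\<dots> = k p" unfolding a_def using l by simp
    finally show "a * clamped l k p + (- a) * clamped l (\<lambda>p. - k p) p = k p" .
  qed
  then have "\<mu> k = a * \<mu> (clamped l k) + (- a) * \<mu> (clamped l (\<lambda>p. - k p))"
    using FreeSp_linear_on_ball[OF \<mu> g1 g2, of a "- a"] k by simp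
  also have "\<dots> = a * (\<mu> (clamped l k) - \<mu> (clamped l (\<lambda>p. - k p)))"
    by (simp add: algebra_simps)
  also have "\<bar>\<dots>\<bar> \<le> a * (\<bar>\<mu> (clamped l k)\<bar> + \<bar>\<mu> (clamped l (\<lambda>p. - k p))\<bar>)"
    using a by (simp add: abs_mult abs_triangle_ineq4 mult_left_mono)
  also have "\<dots> \<le> a * (\<eta> + \<eta>)"
    using peak[OF g1 clamped_one_zero] peak[OF g2 clamped_one_zero] a
    by (intro mult_left_mono add_mono) auto
  also have "\<dots> = \<eta> * (1 + l) / l" unfolding a_def using l by (simp add: field_simps)
  finally show ?thesis .
qed

definition truncate :: "real \<Rightarrow> real \<times> real \<Rightarrow> real \<times> real" where
  "truncate t p = (fst p, min (snd p) t)"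

lemma min_inverse_pow2: "min (1 / 2^n) (1 / 2^N) = (1 :: real) / 2^(max n N)"
proof (cases "n \<le> N")
  case True
  then have "1 / (2::real)^N \<le> 1 / 2^n" by (simp add: frac_le power_increasing)
  then show ?thesis using True by (simp add: min_absorb2 max_absorb2)
next
  case False
  then have "1 / (2::real)^n \<le> 1 / 2^N" by (simp add: frac_le power_increasing)
  then show ?thesis using False by (simp add: min_absorb1 max_absorb1)
qed

lemma truncate_in_Mset:
  assumes p: "p \<in> Mset" and N: "1 \<le> N"
  shows "truncate (1 / 2^N) p \<in> Mset"
proof -
  from p consider (level) a n where "p = (a, 1 / 2^n)" "a \<in> {0..1}" "1 \<le> n"
    | (side) a b where "p = (a, b)" "a \<in> {0, 1}" "b \<in> {0..1/2}"
    unfolding Mset_def by blast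
  then show ?thesis
  proof cases
    case level
    then have "truncate (1 / 2^N) p = (a, 1 / 2^(max n N))"
      unfolding truncate_def by (simp add: min_inverse_pow2)
    then show ?thesis unfolding Mset_def using level by auto
  next
    case side
    then show ?thesis unfolding Mset_def truncate_def by auto
  qed
qed

lemma dM_truncate_le:
  assumes "p \<in> Mset" "q \<in> Mset" "0 < t"
  shows "dM (truncate t p) (truncate t q) \<le> dM p q"
  using Mset_coord_bounds[OF assms(1)] Mset_coord_bounds[OF assms(2)] assms(3)
  unfolding dM_def truncate_def by (auto simp: min_def abs_if)

definition truncated :: "real \<Rightarrow> (real \<times> real \<Rightarrow> real) \<Rightarrow> real \<times> real \<Rightarrow> real" where
  "truncated t f = (\<lambda>p. if p \<in> Mset then f (truncate t p) else 0)"

lemma truncated_in_Lip0_ball: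
  assumes f: "f \<in> Lip0_ball" and N: "1 \<le> N"
  shows "truncated (1 / 2^N) f \<in> Lip0_ball"
proof (rule Lip0_ballI)
  fix u v assume u: "u \<in> Mset" and v: "v \<in> Mset"
  have "\<bar>f (truncate (1 / 2^N) u) - f (truncate (1 / 2^N) v)\<bar>
      \<le> dM (truncate (1 / 2^N) u) (truncate (1 / 2^N) v)"
    using Lip0_ball_lipschitz[OF f truncate_in_Mset[OF u N] truncate_in_Mset[OF v N]] .
  also have "\<dots> \<le> dM u v" using dM_truncate_le[OF u v] by simp
  finally show "\<bar>truncated (1 / 2^N) f u - truncated (1 / 2^N) f v\<bar> \<le> dM u v"
    unfolding truncated_def using u v by simp
qed (use zero_in_Mset Lip0_ball_origin[OF f] in \<open>auto simp: truncated_def truncate_def\<close>)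

lemma abs_diff_truncated_le:
  assumes \<mu>: "\<mu> \<in> FreeSp" "ball_bounded \<mu>"
    and peak: "\<And>g. g \<in> Lip0_ball \<Longrightarrow> g (1, 0) = -1 \<Longrightarrow> \<bar>\<mu> g\<bar> \<le> \<eta>"
    and t: "0 < t" and f: "f \<in> Lip0_ball" and tf: "truncated t f \<in> Lip0_ball"
  shows "\<bar>\<mu> f - \<mu> (truncated t f)\<bar> \<le> 5 * \<eta> / t + 2 * \<eta>"
proof -
  define k where "k = (\<lambda>p. (1/2) * f p + (-1/2) * truncated t f p)"
  have k: "k \<in> Lip0_ball" unfolding k_def by (rule half_diff_in_Lip0_ball[OF f tf])
  have van: "k p = 0" if "p \<in> Mset" "snd p \<le> 5/2 * (2 * t / 5)" for p
    using that unfolding k_def truncated_def truncate_def by (cases p) (simp add: min_absorb1)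
  have "\<bar>\<mu> k\<bar> \<le> \<eta> * (1 + 2 * t / 5) / (2 * t / 5)"
    by (rule abs_le_of_vanishing_below[OF \<mu> peak _ k van]) (simp_all add: t)
  also have "\<dots> = (5 * \<eta> / t + 2 * \<eta>) / 2" using t by (simp add: field_simps)
  finally have "\<bar>2 * \<mu> k\<bar> \<le> 5 * \<eta> / t + 2 * \<eta>" by simp
  moreover have "\<mu> k = (1/2) * \<mu> f + (-1/2) * \<mu> (truncated t f)"
    using FreeSp_linear_on_ball[OF \<mu> f tf] k unfolding k_def by blast
  ultimately show ?thesis by simp
qed

section \<open>Hahn--Banach extension in finitely many directions\<close>

definition sublinear_on :: "('a \<Rightarrow> real) set \<Rightarrow> (('a \<Rightarrow> real) \<Rightarrow> real) \<Rightarrow> bool" where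
  "sublinear_on V p \<longleftrightarrow>
     (\<forall>u\<in>V. \<forall>v\<in>V. (\<lambda>z. u z + v z) \<in> V \<and> p (\<lambda>z. u z + v z) \<le> p u + p v) \<and>
     (\<forall>u\<in>V. \<forall>r. (\<lambda>z. r * u z) \<in> V) \<and> (\<forall>u\<in>V. \<forall>r>0. p (\<lambda>z. r * u z) = r * p u)"

text \<open>The graph of a partial linear functional dominated by \<open>p\<close>; since \<open>V\<close> is only a set of
  functions, linear functionals are handled through their graphs.\<close>
definition dominated_cone ::
    "('a \<Rightarrow> real) set \<Rightarrow> (('a \<Rightarrow> real) \<Rightarrow> real) \<Rightarrow> (('a \<Rightarrow> real) \<times> real) set \<Rightarrow> bool" where
  "dominated_cone V p G \<longleftrightarrow> (\<forall>(v, l)\<in>G. v \<in> V \<and> l \<le> p v) \<and> ((\<lambda>z. 0), 0) \<in> G \<and>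
     (\<forall>(v1, l1)\<in>G. \<forall>(v2, l2)\<in>G. ((\<lambda>z. v1 z + v2 z), l1 + l2) \<in> G) \<and>
     (\<forall>(v, l)\<in>G. \<forall>r>0. ((\<lambda>z. r * v z), r * l) \<in> G)"

definition invariant_along :: "(('a \<Rightarrow> real) \<times> real) set \<Rightarrow> ('a \<Rightarrow> real) \<Rightarrow> real \<Rightarrow> bool" where
  "invariant_along G w c \<longleftrightarrow> (\<forall>(v, l)\<in>G. \<forall>t. ((\<lambda>z. v z + t * w z), l + t * c) \<in> G)"

definition extend_along ::
    "(('a \<Rightarrow> real) \<times> real) set \<Rightarrow> ('a \<Rightarrow> real) \<Rightarrow> real \<Rightarrow> (('a \<Rightarrow> real) \<times> real) set" where
  "extend_along G w c = {((\<lambda>z. v z + t * w z), l + t * c) | v l t. (v, l) \<in> G}"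

lemma sublinear_on_add_mem: "sublinear_on V p \<Longrightarrow> u \<in> V \<Longrightarrow> v \<in> V \<Longrightarrow> (\<lambda>z. u z + v z) \<in> V"
  and sublinear_on_add_le: "sublinear_on V p \<Longrightarrow> u \<in> V \<Longrightarrow> v \<in> V \<Longrightarrow> p (\<lambda>z. u z + v z) \<le> p u + p v"
  and sublinear_on_scale_mem: "sublinear_on V p \<Longrightarrow> u \<in> V \<Longrightarrow> (\<lambda>z. r * u z) \<in> V"
  and sublinear_on_scale: "sublinear_on V p \<Longrightarrow> u \<in> V \<Longrightarrow> 0 < s \<Longrightarrow> p (\<lambda>z. s * u z) = s * p u"
  unfolding sublinear_on_def by blast+

lemma dominated_coneD:
  assumes "dominated_cone V p G"
  shows dominated_cone_mem: "(v, l) \<in> G \<Longrightarrow> v \<in> V"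
    and dominated_cone_le: "(v, l) \<in> G \<Longrightarrow> l \<le> p v"
    and dominated_cone_zero: "((\<lambda>z. 0), 0) \<in> G"
    and dominated_cone_add:
      "(v1, l1) \<in> G \<Longrightarrow> (v2, l2) \<in> G \<Longrightarrow> ((\<lambda>z. v1 z + v2 z), l1 + l2) \<in> G"
    and dominated_cone_scale: "(v, l) \<in> G \<Longrightarrow> 0 < r \<Longrightarrow> ((\<lambda>z. r * v z), r * l) \<in> G"
  using assms unfolding dominated_cone_def by blast+

lemma invariant_alongD: "invariant_along G w c \<Longrightarrow> (v, l) \<in> G \<Longrightarrow> ((\<lambda>z. v z + t * w z), l + t * c) \<in> G"
  unfolding invariant_along_def by fast

text \<open>The one-step extension: \<open>c\<close> is squeezed between \<open>l - p (v - w)\<close> and \<open>p (v + w) - l\<close>.\<close>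
lemma dominated_cone_squeeze:
  assumes sl: "sublinear_on V p" and G: "dominated_cone V p G" and w: "w \<in> V"
  obtains c where "\<And>v l. (v, l) \<in> G \<Longrightarrow> l - p (\<lambda>z. v z + (-1) * w z) \<le> c"
    and "\<And>v l. (v, l) \<in> G \<Longrightarrow> c \<le> p (\<lambda>z. v z + w z) - l"
proof -
  define S where "S = {l - p (\<lambda>z. v z + (-1) * w z) | v l. (v, l) \<in> G}"
  have squeeze: "l1 - p (\<lambda>z. v1 z + (-1) * w z) \<le> p (\<lambda>z. v2 z + w z) - l2"
    if "(v1, l1) \<in> G" "(v2, l2) \<in> G" for v1 l1 v2 l2
  proof -
    have v1: "v1 \<in> V" and v2: "v2 \<in> V" using dominated_cone_mem[OF G] that by auto
    have mw: "(\<lambda>z. (-1) * w z) \<in> V" using sublinear_on_scale_mem[OF sl w] .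
    have "l1 + l2 \<le> p (\<lambda>z. v1 z + v2 z)"
      using dominated_cone_le[OF G dominated_cone_add[OF G that]] .
    also have "(\<lambda>z. v1 z + v2 z) = (\<lambda>z. (v1 z + (-1) * w z) + (v2 z + w z))" by auto
    also have "p \<dots> \<le> p (\<lambda>z. v1 z + (-1) * w z) + p (\<lambda>z. v2 z + w z)"
      by (rule sublinear_on_add_le[OF sl sublinear_on_add_mem[OF sl v1 mw]
          sublinear_on_add_mem[OF sl v2 w]])
    finally show ?thesis by simp
  qed
  have "S \<noteq> {}" unfolding S_def using dominated_cone_zero[OF G] by blast
  moreover have "bdd_above S"
    unfolding S_def bdd_above_def using squeeze[OF _ dominated_cone_zero[OF G]] by auto
  ultimately show ?thesis
    by (intro that[of "Sup S"] cSup_upper cSup_least) (use squeeze S_def in blast)+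
qed

lemma hahn_banach_step:
  assumes sl: "sublinear_on V p" and G: "dominated_cone V p G" and w: "w \<in> V"
  obtains c where "\<And>v l t. (v, l) \<in> G \<Longrightarrow> l + t * c \<le> p (\<lambda>z. v z + t * w z)"
proof -
  obtain c where upper: "\<And>v l. (v, l) \<in> G \<Longrightarrow> l - p (\<lambda>z. v z + (-1) * w z) \<le> c"
    and lower: "\<And>v l. (v, l) \<in> G \<Longrightarrow> c \<le> p (\<lambda>z. v z + w z) - l"
    using dominated_cone_squeeze[OF sl G w] by blast
  have "l + t * c \<le> p (\<lambda>z. v z + t * w z)" if vl: "(v, l) \<in> G" for v l t
  proof -
    have v: "v \<in> V" using dominated_cone_mem[OF G vl] .
    consider "0 < t" | "t = 0" | "t < 0" by linarith
    then show ?thesis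
    proof cases
      case 1
      from lower[OF dominated_cone_scale[OF G vl, of "1/t"]] 1
      have "t * c \<le> t * p (\<lambda>z. (1/t) * v z + w z) - l" by (simp add: field_simps)
      also have "t * p (\<lambda>z. (1/t) * v z + w z) = p (\<lambda>z. t * ((1/t) * v z + w z))"
        using sublinear_on_scale[OF sl sublinear_on_add_mem[OF sl
            sublinear_on_scale_mem[OF sl v, of "1/t"] w] 1]
        by simp
      also have "(\<lambda>z. t * ((1/t) * v z + w z)) = (\<lambda>z. v z + t * w z)"
        using 1 by (auto simp: field_simps)
      finally show ?thesis by simp
    next
      case 2
      then show ?thesis using dominated_cone_le[OF G vl] by simp
    next
      case 3
      from upper[OF dominated_cone_scale[OF G vl, of "-1/t"]] 3
      have "l - (-t) * p (\<lambda>z. (-1/t) * v z + (-1) * w z) \<le> (-t) * c" by (simp add: field_simps)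
      also have "(-t) * p (\<lambda>z. (-1/t) * v z + (-1) * w z)
          = p (\<lambda>z. (-t) * ((-1/t) * v z + (-1) * w z))"
        using sublinear_on_scale[OF sl sublinear_on_add_mem[OF sl
            sublinear_on_scale_mem[OF sl v, of "-1/t"] sublinear_on_scale_mem[OF sl w, of "-1"]],
            of "-t"] 3
        by simp
      also have "(\<lambda>z. (-t) * ((-1/t) * v z + (-1) * w z)) = (\<lambda>z. v z + t * w z)"
        using 3 by (auto simp: field_simps)
      finally show ?thesis by simp
    qed
  qed
  then show ?thesis by (rule that)
qed

lemma extend_alongI:
  "(v, l) \<in> G \<Longrightarrow> u = (\<lambda>z. v z + t * w z) \<Longrightarrow> m = l + t * c \<Longrightarrow> (u, m) \<in> extend_along G w c"
  unfolding extend_along_def by blast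

lemma extend_alongE:
  assumes "x \<in> extend_along G w c"
  obtains v l t where "(v, l) \<in> G" "x = ((\<lambda>z. v z + t * w z), l + t * c)"
  using assms unfolding extend_along_def by blast

lemma extend_along_mono: "G \<subseteq> extend_along G w c"
  by (auto intro: extend_alongI[where t = 0])

lemma dominated_cone_extend_along:
  assumes sl: "sublinear_on V p" and G: "dominated_cone V p G" and w: "w \<in> V"
    and c: "\<And>v l t. (v, l) \<in> G \<Longrightarrow> l + t * c \<le> p (\<lambda>z. v z + t * w z)"
  shows "dominated_cone V p (extend_along G w c)"
proof -
  let ?E = "extend_along G w c"
  have "v \<in> V \<and> l \<le> p v" if "(v, l) \<in> ?E" for v l
  proof -
    obtain v0 l0 t where "(v0, l0) \<in> G" "v = (\<lambda>z. v0 z + t * w z)" "l = l0 + t * c"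
      using \<open>(v, l) \<in> ?E\<close> by (elim extend_alongE) auto
    then show ?thesis
      using c dominated_cone_mem[OF G] sublinear_on_add_mem[OF sl _ sublinear_on_scale_mem[OF sl w]]
      by blast
  qed
  moreover have "((\<lambda>z. v1 z + v2 z), l1 + l2) \<in> ?E"
    if "(v1, l1) \<in> ?E" "(v2, l2) \<in> ?E" for v1 l1 v2 l2
  proof -
    obtain u1 m1 t1 where 1: "(u1, m1) \<in> G" "v1 = (\<lambda>z. u1 z + t1 * w z)" "l1 = m1 + t1 * c"
      using \<open>(v1, l1) \<in> ?E\<close> by (elim extend_alongE) auto
    obtain u2 m2 t2 where 2: "(u2, m2) \<in> G" "v2 = (\<lambda>z. u2 z + t2 * w z)" "l2 = m2 + t2 * c"
      using \<open>(v2, l2) \<in> ?E\<close> by (elim extend_alongE) auto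
    show ?thesis
      by (rule extend_alongI[OF dominated_cone_add[OF G 1(1) 2(1)], where t = "t1 + t2"])
        (auto simp: 1 2 algebra_simps)
  qed
  moreover have "((\<lambda>z. r * v z), r * l) \<in> ?E" if "(v, l) \<in> ?E" "0 < r" for v l r
  proof -
    obtain u m t where "(u, m) \<in> G" "v = (\<lambda>z. u z + t * w z)" "l = m + t * c"
      using \<open>(v, l) \<in> ?E\<close> by (elim extend_alongE) auto
    then show ?thesis
      by (intro extend_alongI[OF dominated_cone_scale[OF G _ \<open>0 < r\<close>], where t = "r * t"])
        (auto simp: algebra_simps)
  qed
  moreover have "((\<lambda>z. 0), 0) \<in> ?E" using extend_along_mono dominated_cone_zero[OF G] by blast
  ultimately show ?thesis unfolding dominated_cone_def by blast
qed

lemma invariant_along_extend_along: "invariant_along (extend_along G w c) w c"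
proof -
  have "((\<lambda>z. v' z + s * w z), l' + s * c) \<in> extend_along G w c"
    if vl': "(v', l') \<in> extend_along G w c" for v' l' s
  proof -
    obtain v l t where "(v, l) \<in> G" "v' = (\<lambda>z. v z + t * w z)" "l' = l + t * c"
      using vl' by (elim extend_alongE) auto
    then show ?thesis by (auto intro!: extend_alongI[where t = "t + s"] simp: algebra_simps)
  qed
  then show ?thesis unfolding invariant_along_def by blast
qed

lemma invariant_along_extend_along_other:
  assumes "invariant_along G w' c'"
  shows "invariant_along (extend_along G w c) w' c'"
proof -
  have "((\<lambda>z. v' z + s * w' z), l' + s * c') \<in> extend_along G w c"
    if vl': "(v', l') \<in> extend_along G w c" for v' l' s
  proof -
    obtain v l t where vl: "(v, l) \<in> G" "v' = (\<lambda>z. v z + t * w z)" "l' = l + t * c"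
      using vl' by (elim extend_alongE) auto
    show ?thesis
      by (rule extend_alongI[OF invariant_alongD[OF assms vl(1), of s], where t = t])
        (auto simp: vl algebra_simps)
  qed
  then show ?thesis unfolding invariant_along_def by blast
qed

lemma dominated_cone_line:
  assumes sl: "sublinear_on V p" and nonneg: "\<And>v. v \<in> V \<Longrightarrow> 0 \<le> p v" and \<psi>: "\<psi> \<in> V"
  shows "dominated_cone V p {((\<lambda>z. r * \<psi> z), r * p \<psi>) | r. True}"
proof -
  define L where "L = {((\<lambda>z. r * \<psi> z), r * p \<psi>) | r. True}"
  have L: "(v, l) \<in> L \<longleftrightarrow> (\<exists>r. v = (\<lambda>z. r * \<psi> z) \<and> l = r * p \<psi>)" for v l
    unfolding L_def by blast
  have "r * p \<psi> \<le> p (\<lambda>z. r * \<psi> z)" for r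
  proof (cases "0 < r")
    case True
    then show ?thesis using sublinear_on_scale[OF sl \<psi>] by simp
  next
    case False
    then have "r * p \<psi> \<le> 0" using nonneg[OF \<psi>] by (simp add: mult_nonpos_nonneg)
    also have "0 \<le> p (\<lambda>z. r * \<psi> z)" by (rule nonneg[OF sublinear_on_scale_mem[OF sl \<psi>]])
    finally show ?thesis .
  qed
  then have "v \<in> V \<and> l \<le> p v" if "(v, l) \<in> L" for v l
    using that sublinear_on_scale_mem[OF sl \<psi>] unfolding L by auto
  moreover have "((\<lambda>z. 0), 0) \<in> L" unfolding L by (auto intro!: exI[where x = 0])
  moreover have "((\<lambda>z. v1 z + v2 z), l1 + l2) \<in> L"
    if vl: "(v1, l1) \<in> L" "(v2, l2) \<in> L" for v1 l1 v2 l2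
  proof -
    obtain r1 r2 where "v1 = (\<lambda>z. r1 * \<psi> z)" "l1 = r1 * p \<psi>" "v2 = (\<lambda>z. r2 * \<psi> z)" "l2 = r2 * p \<psi>"
      using vl unfolding L by blast
    then show ?thesis unfolding L by (intro exI[where x = "r1 + r2"]) (auto simp: algebra_simps)
  qed
  moreover have "((\<lambda>z. s * v z), s * l) \<in> L" if vl: "(v, l) \<in> L" for v l s
  proof -
    obtain r where "v = (\<lambda>z. r * \<psi> z)" "l = r * p \<psi>" using vl unfolding L by blast
    then show ?thesis unfolding L by (intro exI[where x = "s * r"]) auto
  qed
  ultimately show ?thesis unfolding dominated_cone_def L_def[symmetric] by blast
qed

theorem hahn_banach_finite:
  assumes sl: "sublinear_on V p" and "finite W" "W \<subseteq> V" "dominated_cone V p G"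
  shows "\<exists>c G'. dominated_cone V p G' \<and> G \<subseteq> G' \<and> (\<forall>w\<in>W. invariant_along G' w (c w))"
  using assms(2-4)
proof (induction W arbitrary: G rule: finite_induct)
  case empty
  then show ?case by blast
next
  case (insert w W)
  obtain c G' where G': "dominated_cone V p G'" "G \<subseteq> G'" "\<forall>w\<in>W. invariant_along G' w (c w)"
    using insert.IH insert.prems by blast
  have w: "w \<in> V" using insert.prems by simp
  obtain cw where cw: "\<And>v l t. (v, l) \<in> G' \<Longrightarrow> l + t * cw \<le> p (\<lambda>z. v z + t * w z)"
    using hahn_banach_step[OF sl G'(1) w] by blast
  have "dominated_cone V p (extend_along G' w cw)"
    by (rule dominated_cone_extend_along[OF sl G'(1) w cw])
  moreover have "G \<subseteq> extend_along G' w cw" using G'(2) extend_along_mono by blast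
  moreover have "invariant_along (extend_along G' w cw) w' ((c(w := cw)) w')"
    if "w' \<in> insert w W" for w'
  proof (cases "w' = w")
    case True
    then show ?thesis using invariant_along_extend_along by simp
  next
    case False
    with that G'(3) have "invariant_along G' w' (c w')" by simp
    with False show ?thesis by (simp add: invariant_along_extend_along_other)
  qed
  ultimately show ?case by blast
qed

section \<open>Molecular representations over a finite subset\<close>

type_synonym weighted_mol = "real \<times> (real \<times> real) \<times> (real \<times> real)"

definition mol_comb :: "weighted_mol list \<Rightarrow> (real \<times> real \<Rightarrow> real) \<Rightarrow> real" where
  "mol_comb xs = (\<lambda>g. \<Sum>(a, u, v)\<leftarrow>xs. a * mol u v g)"

definition mol_list :: "(real \<times> real) set \<Rightarrow> weighted_mol list \<Rightarrow> bool" where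
  "mol_list Z xs \<longleftrightarrow> (\<forall>(a, u, v)\<in>set xs. 0 \<le> a \<and> u \<in> Z \<and> v \<in> Z \<and> u \<noteq> v)"

definition mol_weight :: "weighted_mol list \<Rightarrow> real" where
  "mol_weight xs = sum_list (map fst xs)"

definition mol_span :: "(real \<times> real) set \<Rightarrow> ((real \<times> real \<Rightarrow> real) \<Rightarrow> real) set" where
  "mol_span Z = {mol_comb xs | xs. mol_list Z xs}"

definition mol_norm :: "(real \<times> real) set \<Rightarrow> ((real \<times> real \<Rightarrow> real) \<Rightarrow> real) \<Rightarrow> real" where
  "mol_norm Z \<psi> = Inf {mol_weight xs | xs. mol_list Z xs \<and> mol_comb xs = \<psi>}"

definition scale_mols :: "real \<Rightarrow> weighted_mol list \<Rightarrow> weighted_mol list" where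
  "scale_mols r xs = map (\<lambda>(a, u, v). (r * a, u, v)) xs"

definition flip_mols :: "weighted_mol list \<Rightarrow> weighted_mol list" where
  "flip_mols xs = map (\<lambda>(a, u, v). (a, v, u)) xs"

lemma mol_swap: "mol u v g = - mol v u g"
  unfolding mol_def dM_commute[of u v] by (simp add: minus_divide_left)

lemma mol_comb_Nil [simp]: "mol_comb [] = (\<lambda>g. 0)"
  and mol_comb_Cons [simp]: "mol_comb ((a, u, v) # xs) = (\<lambda>g. a * mol u v g + mol_comb xs g)"
  and mol_comb_append: "mol_comb (xs @ ys) = (\<lambda>g. mol_comb xs g + mol_comb ys g)"
  unfolding mol_comb_def by simp_all

lemma mol_comb_scale_mols: "mol_comb (scale_mols r xs) = (\<lambda>g. r * mol_comb xs g)"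
proof (induction xs)
  case (Cons x xs)
  then show ?case by (cases x) (simp add: scale_mols_def distrib_left mult.assoc)
qed (simp add: scale_mols_def)

lemma mol_comb_flip_mols: "mol_comb (flip_mols xs) = (\<lambda>g. - mol_comb xs g)"
proof (induction xs)
  case (Cons x xs)
  obtain a u v where "x = (a, u, v)" by (cases x)
  with Cons show ?case by (simp add: flip_mols_def mol_swap[of v u])
qed (simp add: flip_mols_def)

lemma mol_weight_Nil [simp]: "mol_weight [] = 0"
  and mol_weight_Cons [simp]: "mol_weight ((a, u, v) # xs) = a + mol_weight xs"
  and mol_weight_append: "mol_weight (xs @ ys) = mol_weight xs + mol_weight ys"
  unfolding mol_weight_def by simp_all

lemma mol_weight_scale_mols: "mol_weight (scale_mols r xs) = r * mol_weight xs"
  unfolding mol_weight_def scale_mols_def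
  by (induction xs) (auto simp: case_prod_beta algebra_simps)

lemma mol_list_Nil [simp]: "mol_list Z []"
  and mol_list_append: "mol_list Z xs \<Longrightarrow> mol_list Z ys \<Longrightarrow> mol_list Z (xs @ ys)"
  and mol_list_scale_mols: "mol_list Z xs \<Longrightarrow> 0 \<le> r \<Longrightarrow> mol_list Z (scale_mols r xs)"
  and mol_list_flip_mols: "mol_list Z xs \<Longrightarrow> mol_list Z (flip_mols xs)"
  unfolding mol_list_def scale_mols_def flip_mols_def by auto

lemma mol_weight_nonneg: "mol_list Z xs \<Longrightarrow> 0 \<le> mol_weight xs"
  unfolding mol_list_def mol_weight_def by (induction xs) auto

lemma mol_spanI: "mol_list Z xs \<Longrightarrow> mol_comb xs = \<psi> \<Longrightarrow> \<psi> \<in> mol_span Z"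
  unfolding mol_span_def by blast

lemma mol_spanE:
  assumes "\<psi> \<in> mol_span Z"
  obtains xs where "mol_list Z xs" "mol_comb xs = \<psi>"
  using assms unfolding mol_span_def by blast

lemma mol_norm_le_weight: "mol_list Z xs \<Longrightarrow> mol_comb xs = \<psi> \<Longrightarrow> mol_norm Z \<psi> \<le> mol_weight xs"
  unfolding mol_norm_def
  by (rule cInf_lower) (auto simp: bdd_below_def intro!: exI[where x = 0] mol_weight_nonneg)

lemma le_mol_norm:
  assumes "\<psi> \<in> mol_span Z" "\<And>xs. mol_list Z xs \<Longrightarrow> mol_comb xs = \<psi> \<Longrightarrow> c \<le> mol_weight xs"
  shows "c \<le> mol_norm Z \<psi>"
  using assms unfolding mol_norm_def mol_span_def by (intro cInf_greatest) auto

lemma mol_norm_nonneg: "\<psi> \<in> mol_span Z \<Longrightarrow> 0 \<le> mol_norm Z \<psi>"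
  by (rule le_mol_norm) (auto intro: mol_weight_nonneg)

lemma zero_in_mol_span: "(\<lambda>g. 0) \<in> mol_span Z"
  by (rule mol_spanI[of Z "[]"]) simp_all

lemma mol_norm_zero [simp]: "mol_norm Z (\<lambda>g. 0) = 0"
  using mol_norm_le_weight[of Z "[]"] mol_norm_nonneg[OF zero_in_mol_span, of Z]
  by (simp add: order_antisym)

lemma mol_span_add:
  assumes "\<psi> \<in> mol_span Z" "\<phi> \<in> mol_span Z"
  shows "(\<lambda>g. \<psi> g + \<phi> g) \<in> mol_span Z"
proof -
  obtain xs ys where "mol_list Z xs" "mol_comb xs = \<psi>" "mol_list Z ys" "mol_comb ys = \<phi>"
    using assms by (elim mol_spanE)
  then have "mol_list Z (xs @ ys)" "mol_comb (xs @ ys) = (\<lambda>g. \<psi> g + \<phi> g)"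
    by (simp_all add: mol_list_append mol_comb_append)
  then show ?thesis by (rule mol_spanI)
qed

lemma mol_span_scale: "\<psi> \<in> mol_span Z \<Longrightarrow> (\<lambda>g. r * \<psi> g) \<in> mol_span Z"
proof -
  assume "\<psi> \<in> mol_span Z"
  then obtain xs where xs: "mol_list Z xs" "mol_comb xs = \<psi>" by (elim mol_spanE)
  show ?thesis
  proof (cases "0 \<le> r")
    case True
    then have "mol_list Z (scale_mols r xs)" "mol_comb (scale_mols r xs) = (\<lambda>g. r * \<psi> g)"
      by (simp_all add: mol_list_scale_mols xs mol_comb_scale_mols flip: xs(2))
    then show ?thesis by (rule mol_spanI)
  next
    case False
    then have "mol_list Z (scale_mols (-r) (flip_mols xs))"
      by (intro mol_list_scale_mols mol_list_flip_mols xs) simp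
    moreover have "mol_comb (scale_mols (-r) (flip_mols xs)) = (\<lambda>g. r * \<psi> g)"
      by (simp add: mol_comb_scale_mols mol_comb_flip_mols flip: xs(2))
    ultimately show ?thesis by (rule mol_spanI)
  qed
qed

lemma mol_norm_add:
  assumes \<psi>: "\<psi> \<in> mol_span Z" and \<phi>: "\<phi> \<in> mol_span Z"
  shows "mol_norm Z (\<lambda>g. \<psi> g + \<phi> g) \<le> mol_norm Z \<psi> + mol_norm Z \<phi>"
proof -
  have "mol_norm Z (\<lambda>g. \<psi> g + \<phi> g) - mol_norm Z \<phi> \<le> mol_weight xs"
    if xs: "mol_list Z xs" "mol_comb xs = \<psi>" for xs
  proof -
    have "mol_norm Z (\<lambda>g. \<psi> g + \<phi> g) - mol_weight xs \<le> mol_norm Z \<phi>"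
    proof (rule le_mol_norm[OF \<phi>])
      fix ys assume ys: "mol_list Z ys" "mol_comb ys = \<phi>"
      have "mol_norm Z (\<lambda>g. \<psi> g + \<phi> g) \<le> mol_weight (xs @ ys)"
        by (rule mol_norm_le_weight[OF mol_list_append[OF xs(1) ys(1)]])
          (simp add: mol_comb_append xs(2) ys(2))
      then show "mol_norm Z (\<lambda>g. \<psi> g + \<phi> g) - mol_weight xs \<le> mol_weight ys"
        by (simp add: mol_weight_append)
    qed
    then show ?thesis by simp
  qed
  then have "mol_norm Z (\<lambda>g. \<psi> g + \<phi> g) - mol_norm Z \<phi> \<le> mol_norm Z \<psi>"
    by (intro le_mol_norm[OF \<psi>])
  then show ?thesis by simp
qed

lemma mol_norm_scale:
  assumes r: "0 < r" and \<psi>: "\<psi> \<in> mol_span Z"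
  shows "mol_norm Z (\<lambda>g. r * \<psi> g) = r * mol_norm Z \<psi>"
proof -
  have scaled: "mol_norm Z (\<lambda>g. s * \<phi> g) \<le> s * mol_norm Z \<phi>" if "0 < s" "\<phi> \<in> mol_span Z" for s \<phi>
  proof -
    have "mol_norm Z (\<lambda>g. s * \<phi> g) / s \<le> mol_norm Z \<phi>"
    proof (rule le_mol_norm[OF \<open>\<phi> \<in> mol_span Z\<close>])
      fix xs assume "mol_list Z xs" "mol_comb xs = \<phi>"
      then have "mol_list Z (scale_mols s xs)" "mol_comb (scale_mols s xs) = (\<lambda>g. s * \<phi> g)"
        using \<open>0 < s\<close> by (simp_all add: mol_list_scale_mols mol_comb_scale_mols)
      then have "mol_norm Z (\<lambda>g. s * \<phi> g) \<le> mol_weight (scale_mols s xs)"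
        by (rule mol_norm_le_weight)
      then show "mol_norm Z (\<lambda>g. s * \<phi> g) / s \<le> mol_weight xs"
        using \<open>0 < s\<close> by (simp add: mol_weight_scale_mols divide_le_eq mult.commute)
    qed
    then show ?thesis using \<open>0 < s\<close> by (simp add: divide_le_eq mult.commute)
  qed
  have "mol_norm Z (\<lambda>g. (1/r) * (r * \<psi> g)) \<le> (1/r) * mol_norm Z (\<lambda>g. r * \<psi> g)"
    using r by (intro scaled mol_span_scale \<psi>) simp
  then have "r * mol_norm Z \<psi> \<le> mol_norm Z (\<lambda>g. r * \<psi> g)"
    using r by (simp add: field_simps)
  with scaled[OF r \<psi>] show ?thesis by simp
qed

lemma sublinear_on_mol_norm: "sublinear_on (mol_span Z) (mol_norm Z)"
  unfolding sublinear_on_def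
  using mol_span_add mol_norm_add mol_span_scale mol_norm_scale by blast

lemma mol_comb_single: "dM u v \<noteq> 0 \<Longrightarrow> mol_comb [(dM u v, u, v)] = (\<lambda>g. g u - g v)"
  by (simp add: mol_def)

lemma point_diff_in_mol_span:
  assumes "Z \<subseteq> Mset" "u \<in> Z" "v \<in> Z"
  shows "(\<lambda>g. g u - g v) \<in> mol_span Z"
proof (cases "u = v")
  case False
  have "0 < dM u v" using dM_pos assms False by blast
  then have "mol_list Z [(dM u v, u, v)]" "mol_comb [(dM u v, u, v)] = (\<lambda>g. g u - g v)"
    using assms False mol_comb_single[of u v] by (auto simp: mol_list_def)
  then show ?thesis by (rule mol_spanI)
qed (use zero_in_mol_span in simp)

lemma mol_norm_point_diff_le:
  assumes "Z \<subseteq> Mset" "u \<in> Z" "v \<in> Z"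
  shows "mol_norm Z (\<lambda>g. g u - g v) \<le> dM u v"
proof (cases "u = v")
  case False
  have "0 < dM u v" using dM_pos assms False by blast
  then have "mol_list Z [(dM u v, u, v)]" "mol_comb [(dM u v, u, v)] = (\<lambda>g. g u - g v)"
    using assms False mol_comb_single[of u v] by (auto simp: mol_list_def)
  then show ?thesis using mol_norm_le_weight by fastforce
qed simp

lemma mol_span_sum:
  fixes n :: nat
  assumes "\<forall>i<n. \<phi> i \<in> mol_span Z"
  shows "(\<lambda>g. \<Sum>i<n. c i * \<phi> i g) \<in> mol_span Z"
  using assms
proof (induction n)
  case (Suc n)
  then show ?case using mol_span_add[OF _ mol_span_scale] by simp
qed (simp add: zero_in_mol_span)

lemma abs_mol_comb_le_weight:
  assumes f: "f \<in> Lip0_ball" and Z: "Z \<subseteq> Mset" and xs: "mol_list Z xs"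
  shows "\<bar>mol_comb xs f\<bar> \<le> mol_weight xs"
  using xs
proof (induction xs)
  case (Cons x xs)
  obtain a u v where x: "x = (a, u, v)" by (cases x)
  with Cons.prems Z have a: "0 \<le> a" and u: "u \<in> Mset" and v: "v \<in> Mset" and uv: "u \<noteq> v"
    by (auto simp: mol_list_def)
  have "\<bar>mol u v f\<bar> \<le> 1"
    using Lip0_ball_lipschitz[OF f u v] dM_pos[OF u v uv]
    by (simp add: mol_def abs_divide divide_le_eq_1)
  then have "\<bar>a * mol u v f\<bar> \<le> a" using a by (simp add: abs_mult mult_left_le)
  moreover have "\<bar>mol_comb xs f\<bar> \<le> mol_weight xs" using Cons by (simp add: mol_list_def)
  moreover have "\<bar>mol_comb (x # xs) f\<bar> \<le> \<bar>a * mol u v f\<bar> + \<bar>mol_comb xs f\<bar>"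
    unfolding x by (simp add: abs_triangle_ineq)
  ultimately have "\<bar>mol_comb (x # xs) f\<bar> \<le> a + mol_weight xs" by linarith
  then show ?case unfolding x by simp
qed simp

lemma mol_comb_eq_on:
  assumes "mol_list Z xs" "\<And>z. z \<in> Z \<Longrightarrow> F z = f z + \<kappa>"
  shows "mol_comb xs F = mol_comb xs f"
  using assms(1)
proof (induction xs)
  case (Cons x xs)
  obtain a u v where "x = (a, u, v)" by (cases x)
  with Cons assms(2) show ?case by (simp add: mol_list_def mol_def)
qed simp

lemma mol_comb_walk:
  assumes inv: "\<And>z. z \<in> Z \<Longrightarrow> invariant_along G (\<lambda>g. g z - g x0) (f z)"
    and ys: "mol_list Z ys" and vl: "(v, l) \<in> G"
  shows "((\<lambda>g. v g - mol_comb ys g), l - mol_comb ys f) \<in> G"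
  using ys
proof (induction ys)
  case Nil
  then show ?case using vl by simp
next
  case (Cons y ys)
  obtain a u w where y: "y = (a, u, w)" by (cases y)
  with Cons.prems have u: "u \<in> Z" and w: "w \<in> Z"
    and IH: "((\<lambda>g. v g - mol_comb ys g), l - mol_comb ys f) \<in> G"
    using Cons.IH by (auto simp: mol_list_def)
  define k where "k = a / dM u w"
  have "((\<lambda>g. (v g - mol_comb ys g) + (-k) * (g u - g x0) + k * (g w - g x0)),
      (l - mol_comb ys f) + (-k) * f u + k * f w) \<in> G"
    by (intro invariant_alongD[OF inv] IH u w)
  moreover have "(\<lambda>g. (v g - mol_comb ys g) + (-k) * (g u - g x0) + k * (g w - g x0))
      = (\<lambda>g. v g - mol_comb (y # ys) g)"
    unfolding y k_def by (auto simp: mol_def algebra_simps diff_divide_distrib)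
  moreover have "(l - mol_comb ys f) + (-k) * f u + k * f w = l - mol_comb (y # ys) f"
    unfolding y k_def by (simp add: mol_def algebra_simps diff_divide_distrib)
  ultimately show ?case by (simp only:)
qed

text \<open>Kantorovich duality on a finite set: Hahn--Banach extends \<open>r \<psi> \<mapsto> r mol_norm Z \<psi>\<close> to a
  functional dominated by \<open>mol_norm Z\<close>, whose values \<open>f z\<close> on the directions
  \<open>\<delta>\<^sub>z - \<delta>\<^sub>x\<^sub>0\<close> form a 1-Lipschitz function.\<close>
lemma mol_norm_le_lipschitz:
  assumes Z: "finite Z" "Z \<subseteq> Mset" "x0 \<in> Z" and \<psi>: "\<psi> \<in> mol_span Z"
  obtains f where "\<And>u v. u \<in> Z \<Longrightarrow> v \<in> Z \<Longrightarrow> f u - f v \<le> dM u v" "mol_norm Z \<psi> \<le> \<psi> f"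
proof -
  define e :: "real \<times> real \<Rightarrow> (real \<times> real \<Rightarrow> real) \<Rightarrow> real"
    where "e z = (\<lambda>g. g z - g x0)" for z
  have "e ` Z \<subseteq> mol_span Z" unfolding e_def using point_diff_in_mol_span[OF Z(2) _ Z(3)] by blast
  from hahn_banach_finite[OF sublinear_on_mol_norm finite_imageI[OF Z(1)] this
      dominated_cone_line[OF sublinear_on_mol_norm mol_norm_nonneg \<psi>]]
  obtain c G where G: "dominated_cone (mol_span Z) (mol_norm Z) G"
      and line: "{((\<lambda>g. r * \<psi> g), r * mol_norm Z \<psi>) | r. True} \<subseteq> G"
      and inv: "\<forall>w\<in>e ` Z. invariant_along G w (c w)"
    by blast
  define f where "f z = c (e z)" for z
  have inv': "\<And>z. z \<in> Z \<Longrightarrow> invariant_along G (\<lambda>g. g z - g x0) (f z)"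
    using inv unfolding f_def by (simp add: e_def)
  have walk: "l - mol_comb ys f \<le> mol_norm Z (\<lambda>g. v g - mol_comb ys g)"
    if "(v, l) \<in> G" "mol_list Z ys" for v l ys
    using dominated_cone_le[OF G mol_comb_walk[OF inv' that(2,1)]] .
  have lip: "f u - f v \<le> dM u v" if u: "u \<in> Z" and v: "v \<in> Z" for u v
  proof (cases "u = v")
    case False
    then have d: "0 < dM v u" using dM_pos u v Z(2) by blast
    then have "mol_list Z [(dM v u, v, u)]" using False u v by (auto simp: mol_list_def)
    from walk[OF dominated_cone_zero[OF G] this] d
    have "f u - f v \<le> mol_norm Z (\<lambda>g. g u - g v)" by (simp add: mol_def)
    also have "\<dots> \<le> dM u v" by (rule mol_norm_point_diff_le[OF Z(2) u v])
    finally show ?thesis .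
  qed simp
  obtain xs where xs: "mol_list Z xs" "mol_comb xs = \<psi>" using \<psi> by (elim mol_spanE)
  have "(\<psi>, mol_norm Z \<psi>) \<in> {((\<lambda>g. r * \<psi> g), r * mol_norm Z \<psi>) | r. True}"
    by (rule CollectI, rule exI[where x = 1]) simp
  from walk[OF subsetD[OF line this] xs(1)] xs(2) have "mol_norm Z \<psi> \<le> \<psi> f" by simp
  with lip show ?thesis by (rule that)
qed

lemma mcshane_Lip0_ball:
  assumes Z: "finite Z" "Z \<noteq> {}" "Z \<subseteq> Mset" and lip: "\<And>u v. u \<in> Z \<Longrightarrow> v \<in> Z \<Longrightarrow> f u - f v \<le> dM u v"
  obtains F \<kappa> where "F \<in> Lip0_ball" "\<And>z. z \<in> Z \<Longrightarrow> F z = f z + \<kappa>"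
proof -
  define F0 where "F0 p = Min ((\<lambda>z. f z + dM p z) ` Z)" for p
  have F0_le: "F0 p \<le> f z + dM p z" if "z \<in> Z" for p z
    unfolding F0_def using that Z(1) by (intro Min_le) auto
  have F0_attained: "\<exists>z\<in>Z. F0 p = f z + dM p z" for p
  proof -
    have "F0 p \<in> (\<lambda>z. f z + dM p z) ` Z" unfolding F0_def using Z(1,2) by (intro Min_in) auto
    then show ?thesis by auto
  qed
  have F0_on_Z: "F0 u = f u" if "u \<in> Z" for u
    using F0_le[OF that, of u] F0_attained[of u] lip[OF that] by force
  have F0_lip: "F0 p \<le> F0 q + dM p q" if "p \<in> Mset" "q \<in> Mset" for p q
  proof -
    obtain z where z: "z \<in> Z" "F0 q = f z + dM q z" using F0_attained by blast
    have "F0 p \<le> f z + dM p z" by (rule F0_le[OF z(1)])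
    also have "\<dots> \<le> f z + (dM p q + dM q z)" using dM_triangle[OF that, of z] z(1) Z(3) by auto
    finally show ?thesis using z(2) by simp
  qed
  define F where "F p = (if p \<in> Mset then F0 p - F0 (0, 0) else 0)" for p
  have "F \<in> Lip0_ball"
  proof (rule Lip0_ballI)
    fix u v assume "u \<in> Mset" "v \<in> Mset"
    then show "\<bar>F u - F v\<bar> \<le> dM u v"
      using F0_lip[of u v] F0_lip[of v u] dM_commute[of v u]
      unfolding F_def by (simp add: abs_le_iff)
  qed (simp_all add: F_def zero_in_Mset)
  moreover have "F z = f z + (- F0 (0, 0))" if "z \<in> Z" for z
    unfolding F_def using F0_on_Z that Z(3) by auto
  ultimately show ?thesis using that by blast
qed

theorem mol_norm_le_dual:
  assumes Z: "finite Z" "Z \<noteq> {}" "Z \<subseteq> Mset" and \<psi>: "\<psi> \<in> mol_span Z"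
  obtains F where "F \<in> Lip0_ball" "mol_norm Z \<psi> \<le> \<psi> F"
proof -
  obtain x0 where "x0 \<in> Z" using Z(2) by blast
  obtain f where lip: "\<And>u v. u \<in> Z \<Longrightarrow> v \<in> Z \<Longrightarrow> f u - f v \<le> dM u v" and le: "mol_norm Z \<psi> \<le> \<psi> f"
    using mol_norm_le_lipschitz[OF Z(1,3) \<open>x0 \<in> Z\<close> \<psi>] by blast
  obtain F \<kappa> where F: "F \<in> Lip0_ball" "\<And>z. z \<in> Z \<Longrightarrow> F z = f z + \<kappa>"
    using mcshane_Lip0_ball[OF Z lip] by blast
  obtain xs where xs: "mol_list Z xs" "mol_comb xs = \<psi>" using \<psi> by (elim mol_spanE)
  have "\<psi> F = \<psi> f" using mol_comb_eq_on[OF xs(1) F(2)] xs(2) by simp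
  with F(1) le show ?thesis using that by simp
qed

lemma mol_norm_approx:
  assumes "\<psi> \<in> mol_span Z" "0 < e"
  obtains xs where "mol_list Z xs" "mol_comb xs = \<psi>" "mol_weight xs < mol_norm Z \<psi> + e"
proof -
  have "{mol_weight xs | xs. mol_list Z xs \<and> mol_comb xs = \<psi>} \<noteq> {}"
    using assms(1) by (auto elim: mol_spanE)
  from cInf_lessD[OF this, of "mol_norm Z \<psi> + e"] assms(2) show ?thesis
    using that unfolding mol_norm_def by auto
qed

lemma normalized_mol_comb_in_convF:
  assumes xs: "mol_list Z xs" and band: "\<And>z. z \<in> Z \<Longrightarrow> \<delta> < snd z \<and> snd z < \<epsilon>"
    and Z: "Z \<subseteq> Mset" and A: "0 < mol_weight xs"
  shows "(\<lambda>f. mol_comb xs f / mol_weight xs) \<in> convF (Mol \<delta> \<epsilon>)"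
proof -
  define w where "w j = fst (xs ! j) / mol_weight xs" for j
  define m where "m j = mol (fst (snd (xs ! j))) (snd (snd (xs ! j)))" for j
  have entry: "0 \<le> fst (xs ! j) \<and> fst (snd (xs ! j)) \<in> Z \<and> snd (snd (xs ! j)) \<in> Z
      \<and> fst (snd (xs ! j)) \<noteq> snd (snd (xs ! j))" if "j < length xs" for j
    using xs nth_mem[OF that] unfolding mol_list_def by (auto simp: case_prod_beta)
  have "(\<Sum>j<length xs. w j) = 1"
    using A unfolding w_def mol_weight_def
    by (simp add: sum_divide_distrib[symmetric] sum_list_sum_nth atLeast0LessThan)
  moreover have "0 \<le> w j \<and> m j \<in> Mol \<delta> \<epsilon>" if "j < length xs" for j
    using entry[OF that] band Z A unfolding w_def m_def Mol_def by fastforce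
  moreover have "(\<lambda>f. mol_comb xs f / mol_weight xs) = (\<lambda>f. \<Sum>j<length xs. w j * m j f)"
    unfolding mol_comb_def w_def m_def
    by (simp add: sum_list_sum_nth atLeast0LessThan sum_divide_distrib case_prod_beta)
  ultimately show ?thesis unfolding convF_def by blast
qed

section \<open>Approximation by convex combinations of molecules\<close>

lemma near_convF_Mol:
  assumes \<mu>: "ball_bounded \<mu>" "fnorm \<mu> \<le> 1" "1 - \<eta> < fnorm \<mu>"
    and Z: "finite Z" "Z \<noteq> {}" "Z \<subseteq> Mset" and band: "\<And>z. z \<in> Z \<Longrightarrow> \<delta> < snd z \<and> snd z < \<epsilon>"
    and \<psi>: "\<psi> \<in> mol_span Z" and approx: "\<And>f. f \<in> Lip0_ball \<Longrightarrow> \<bar>\<mu> f - \<psi> f\<bar> \<le> E"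
    and small: "\<eta> + E < 1" and e: "0 < e"
  shows "\<exists>\<nu>\<in>convF (Mol \<delta> \<epsilon>). fnorm (\<lambda>f. \<mu> f - \<nu> f) \<le> 2 * E + \<eta> + e"
proof -
  obtain F where F: "F \<in> Lip0_ball" "mol_norm Z \<psi> \<le> \<psi> F"
    using mol_norm_le_dual[OF Z \<psi>] by blast
  obtain xs where xs: "mol_list Z xs" "mol_comb xs = \<psi>" "mol_weight xs < mol_norm Z \<psi> + e"
    using mol_norm_approx[OF \<psi> e] by blast
  define A where "A = mol_weight xs"
  have "\<mu> F \<le> 1" using abs_le_fnorm[OF \<mu>(1) F(1)] \<mu>(2) by simp
  then have A_upper: "A < 1 + E + e" using approx[OF F(1)] F(2) xs(3) unfolding A_def by linarith
  have \<psi>_le: "\<bar>\<psi> f\<bar> \<le> A" if "f \<in> Lip0_ball" for f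
    using abs_mol_comb_le_weight[OF that Z(3) xs(1)] xs(2) unfolding A_def by simp
  obtain f1 where "f1 \<in> Lip0_ball" "1 - \<eta> < \<bar>\<mu> f1\<bar>" using fnorm_gt_witness[OF \<mu>(3)] by blast
  then have A_lower: "1 - \<eta> - E < A" using approx \<psi>_le by fastforce
  then have A: "0 < A" using small by linarith
  define \<nu> where "\<nu> f = \<psi> f / A" for f
  have "\<nu> \<in> convF (Mol \<delta> \<epsilon>)"
    using normalized_mol_comb_in_convF[OF xs(1) band Z(3)] A xs(2) unfolding \<nu>_def A_def by auto
  moreover have "\<bar>\<mu> f - \<nu> f\<bar> \<le> 2 * E + \<eta> + e" if f: "f \<in> Lip0_ball" for f
  proof -
    have "\<bar>\<psi> f - \<nu> f\<bar> = \<bar>\<psi> f\<bar> * \<bar>1 - 1 / A\<bar>"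
      unfolding \<nu>_def by (simp add: abs_mult[symmetric] algebra_simps)
    also have "\<dots> \<le> A * \<bar>1 - 1 / A\<bar>" using \<psi>_le[OF f] by (simp add: mult_right_mono)
    also have "\<dots> = \<bar>A * (1 - 1 / A)\<bar>" using A by (simp add: abs_mult)
    also have "\<dots> = \<bar>A - 1\<bar>" using A by (simp add: right_diff_distrib)
    also have "\<dots> \<le> E + \<eta> + e" using A_upper A_lower e \<mu>(2,3) by (simp add: abs_le_iff)
    finally show ?thesis using approx[OF f] by linarith
  qed
  ultimately show ?thesis using fnorm_le[of "\<lambda>f. \<mu> f - \<nu> f"] by blast
qed

lemma truncated_point_approx:
  assumes \<mu>: "\<mu> \<in> FreeSp" "ball_bounded \<mu>"
    and peak: "\<And>g. g \<in> Lip0_ball \<Longrightarrow> g (1, 0) = -1 \<Longrightarrow> \<bar>\<mu> g\<bar> \<le> \<eta>"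
    and N: "1 \<le> N" and t: "t = 1 / 2^N" and e: "0 < e"
  obtains n :: nat and c q where "\<forall>i<n. q i \<in> Mset \<and> snd (q i) \<le> t"
    "\<forall>f\<in>Lip0_ball. \<bar>\<mu> f - (\<Sum>i<n. c i * f (q i))\<bar> \<le> 5 * \<eta> / t + 2 * \<eta> + e"
proof -
  obtain n :: nat and c p where p: "\<forall>i<n. p i \<in> Mset"
    and approx: "\<forall>f\<in>Lip0_ball. \<bar>\<mu> f - (\<Sum>i<n. c i * f (p i))\<bar> < e"
    by (rule FreeSp_approx_on_ball[OF \<mu> e])
  define q where "q i = truncate t (p i)" for i
  have "\<forall>i<n. q i \<in> Mset \<and> snd (q i) \<le> t"
    using truncate_in_Mset[OF _ N] p unfolding q_def t by (simp add: truncate_def)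
  moreover have "\<bar>\<mu> f - (\<Sum>i<n. c i * f (q i))\<bar> \<le> 5 * \<eta> / t + 2 * \<eta> + e" if f: "f \<in> Lip0_ball" for f
  proof -
    have tf: "truncated t f \<in> Lip0_ball" using truncated_in_Lip0_ball[OF f N] t by simp
    have "\<bar>\<mu> f - \<mu> (truncated t f)\<bar> \<le> 5 * \<eta> / t + 2 * \<eta>"
      using abs_diff_truncated_le[OF \<mu> peak _ f tf] t by simp
    moreover have "\<bar>\<mu> (truncated t f) - (\<Sum>i<n. c i * truncated t f (p i))\<bar> < e"
      using approx tf by blast
    moreover have "(\<Sum>i<n. c i * truncated t f (p i)) = (\<Sum>i<n. c i * f (q i))"
      unfolding truncated_def q_def using p by simp
    ultimately show ?thesis by linarith
  qed
  ultimately show ?thesis using that by blast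
qed

definition lift :: "real \<Rightarrow> real \<times> real \<Rightarrow> real \<times> real" where
  "lift s q = (fst q, max (snd q) s)"

lemma
  assumes q: "q \<in> Mset" and s: "0 \<le> s" "s \<le> 1/2" and level: "0 < snd q \<Longrightarrow> s \<le> snd q"
  shows lift_in_Mset: "lift s q \<in> Mset"
    and dM_lift_le: "dM q (lift s q) \<le> s"
proof -
  note Q = Mset_coord_bounds[OF q]
  show "lift s q \<in> Mset" "dM q (lift s q) \<le> s"
  proof (atomize (full), cases "0 < snd q")
    case True
    then show "lift s q \<in> Mset \<and> dM q (lift s q) \<le> s"
      using q level s unfolding lift_def by (cases q) (auto simp: max_absorb1)
  next
    case False
    then have "snd q = 0" "fst q = 0 \<or> fst q = 1" using Q by auto
    then show "lift s q \<in> Mset \<and> dM q (lift s q) \<le> s"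
      using s unfolding lift_def Mset_def dM_def by auto
  qed
qed

lemma finite_pos_lower_bound:
  fixes A :: "real set"
  assumes "0 < b" "finite A" "\<forall>a\<in>A. 0 < a"
  obtains s where "0 < s" "s \<le> b" "\<forall>a\<in>A. s \<le> a"
proof (rule that[of "Min (insert b A)"])
  show "0 < Min (insert b A)" using assms by (subst Min_gr_iff) auto
qed (use assms in auto)

lemma abs_point_comb_shift_le:
  fixes n :: nat and f :: "'a \<Rightarrow> real"
  assumes "\<And>i. i < n \<Longrightarrow> \<bar>f (q i) - f (q' i) + f x\<bar> \<le> r"
  shows "\<bar>(\<Sum>i<n. c i * f (q i)) - (\<Sum>i<n. c i * (f (q' i) - f x))\<bar> \<le> (\<Sum>i<n. \<bar>c i\<bar> * r)"
proof -
  have "(\<Sum>i<n. c i * f (q i)) - (\<Sum>i<n. c i * (f (q' i) - f x))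
      = (\<Sum>i<n. c i * f (q i) - c i * (f (q' i) - f x))"
    by (rule sum_subtractf[symmetric])
  also have "\<dots> = (\<Sum>i<n. c i * (f (q i) - f (q' i) + f x))"
    by (rule sum.cong) (simp_all add: algebra_simps)
  also have "\<bar>\<dots>\<bar> \<le> (\<Sum>i<n. \<bar>c i\<bar> * \<bar>f (q i) - f (q' i) + f x\<bar>)"
    by (rule order.trans[OF sum_abs]) (simp add: abs_mult)
  also have "\<dots> \<le> (\<Sum>i<n. \<bar>c i\<bar> * r)"
    using assms by (intro sum_mono mult_left_mono) auto
  finally show ?thesis .
qed

lemma lifted_point_approx:
  fixes n :: nat
  assumes q: "\<forall>i<n. q i \<in> Mset \<and> snd (q i) \<le> t" and t: "0 < t" "t \<le> 1/2" and e: "0 < e"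
  obtains s Z \<psi> where "0 < s" "finite Z" "Z \<noteq> {}" "Z \<subseteq> Mset" "\<forall>z\<in>Z. s \<le> snd z \<and> snd z \<le> t"
    "\<psi> \<in> mol_span Z" "\<forall>f\<in>Lip0_ball. \<bar>(\<Sum>i<n. c i * f (q i)) - \<psi> f\<bar> \<le> e"
proof -
  define C where "C = (\<Sum>i<n. \<bar>c i\<bar>)"
  have C: "0 \<le> C" unfolding C_def by (simp add: sum_nonneg)
  have b: "0 < min t (e / (2 * (C + 1)))" using t e C by simp
  have "finite ((\<lambda>i. snd (q i)) ` {i. i < n \<and> 0 < snd (q i)})"
    "\<forall>a\<in>(\<lambda>i. snd (q i)) ` {i. i < n \<and> 0 < snd (q i)}. 0 < a" by auto
  then obtain s where "0 < s" "s \<le> min t (e / (2 * (C + 1)))"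
    and "\<forall>a\<in>(\<lambda>i. snd (q i)) ` {i. i < n \<and> 0 < snd (q i)}. s \<le> a"
    by (rule finite_pos_lower_bound[OF b])
  then have s: "0 < s" "s \<le> t" "s \<le> e / (2 * (C + 1))"
    and level: "\<And>i. i < n \<Longrightarrow> 0 < snd (q i) \<Longrightarrow> s \<le> snd (q i)" by auto
  define x' where "x' = ((0::real), s)"
  define Z where "Z = insert x' (lift s ` q ` {..<n})"
  have x': "x' \<in> Mset" unfolding x'_def Mset_def using s t by auto
  have lifted: "lift s (q i) \<in> Mset" "dM (q i) (lift s (q i)) \<le> s" if "i < n" for i
    using lift_in_Mset[of "q i" s] dM_lift_le[of "q i" s] q s t level[OF that] that by auto
  have "Z \<subseteq> Mset" unfolding Z_def using lifted(1) x' by auto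
  moreover have "\<forall>z\<in>Z. s \<le> snd z \<and> snd z \<le> t" unfolding Z_def x'_def lift_def using q s by auto
  ultimately have Z: "finite Z" "Z \<noteq> {}" "Z \<subseteq> Mset" "\<forall>z\<in>Z. s \<le> snd z \<and> snd z \<le> t"
    unfolding Z_def by auto
  define \<psi> where "\<psi> g = (\<Sum>i<n. c i * (g (lift s (q i)) - g x'))" for g :: "real \<times> real \<Rightarrow> real"
  have "\<psi> \<in> mol_span Z"
    unfolding \<psi>_def using Z(3)
    by (intro mol_span_sum allI impI point_diff_in_mol_span) (auto simp: Z_def)
  moreover have "\<bar>(\<Sum>i<n. c i * f (q i)) - \<psi> f\<bar> \<le> e" if f: "f \<in> Lip0_ball" for f
  proof -
    have "\<bar>f (q i) - f (lift s (q i)) + f x'\<bar> \<le> 2 * s" if "i < n" for i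
      using Lip0_ball_lipschitz[OF f, of "q i" "lift s (q i)"] lifted[OF that] q that
        Lip0_ball_abs_le[OF f x'] unfolding x'_def by (simp add: abs_le_iff)
    then have "\<bar>(\<Sum>i<n. c i * f (q i)) - \<psi> f\<bar> \<le> (\<Sum>i<n. \<bar>c i\<bar> * (2 * s))"
      unfolding \<psi>_def by (rule abs_point_comb_shift_le)
    also have "\<dots> = 2 * s * C" unfolding C_def by (simp add: sum_distrib_left mult.commute)
    also have "\<dots> \<le> 2 * (e / (2 * (C + 1))) * C" using s C by (intro mult_right_mono) auto
    also have "\<dots> \<le> e" using C e by (simp add: field_simps)
    finally show ?thesis .
  qed
  ultimately show ?thesis using that s Z by blast
qed

lemma band_approx:
  assumes \<mu>: "\<mu> \<in> FreeSp" "ball_bounded \<mu>"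
    and peak: "\<And>g. g \<in> Lip0_ball \<Longrightarrow> g (1, 0) = -1 \<Longrightarrow> \<bar>\<mu> g\<bar> \<le> \<eta>"
    and N: "1 \<le> N" and t: "t = 1 / 2^N" and e: "0 < e"
  obtains s Z \<psi> where "0 < s" "finite Z" "Z \<noteq> {}" "Z \<subseteq> Mset" "\<forall>z\<in>Z. s \<le> snd z \<and> snd z \<le> t"
    "\<psi> \<in> mol_span Z" "\<forall>f\<in>Lip0_ball. \<bar>\<mu> f - \<psi> f\<bar> \<le> 5 * \<eta> / t + 2 * \<eta> + 2 * e"
proof -
  obtain n :: nat and c q where q: "\<forall>i<n. q i \<in> Mset \<and> snd (q i) \<le> t"
    and approx_q: "\<forall>f\<in>Lip0_ball. \<bar>\<mu> f - (\<Sum>i<n. c i * f (q i))\<bar> \<le> 5 * \<eta> / t + 2 * \<eta> + e"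
    by (rule truncated_point_approx[OF \<mu> peak N t e])
  have "0 < t" "t \<le> 1/2" using power_increasing[OF N, of "2::real"] by (auto simp: t)
  then obtain s Z \<psi> where band: "0 < s" "finite Z" "Z \<noteq> {}" "Z \<subseteq> Mset" "\<forall>z\<in>Z. s \<le> snd z \<and> snd z \<le> t"
    "\<psi> \<in> mol_span Z" and approx_\<psi>: "\<forall>f\<in>Lip0_ball. \<bar>(\<Sum>i<n. c i * f (q i)) - \<psi> f\<bar> \<le> e"
    by (rule lifted_point_approx[OF q _ _ e])
  have "\<forall>f\<in>Lip0_ball. \<bar>\<mu> f - \<psi> f\<bar> \<le> 5 * \<eta> / t + 2 * \<eta> + 2 * e"
    using approx_q approx_\<psi> unfolding abs_le_iff by fastforce
  with band show ?thesis by (rule that)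
qed

lemma exists_dyadic_between:
  assumes "0 < (\<epsilon>::real)" "\<epsilon> < 1"
  obtains N :: nat where "1 \<le> N" "\<epsilon> / 2 \<le> 1 / 2^N" "1 / 2^N < \<epsilon>"
proof -
  have ex: "\<exists>n. (1/2::real)^n < \<epsilon>" by (rule real_arch_pow_inv) (use assms in auto)
  define N where "N = (LEAST n. (1/2::real)^n < \<epsilon>)"
  have lt: "(1/2::real)^N < \<epsilon>" unfolding N_def by (rule LeastI_ex[OF ex])
  then obtain M where M: "N = Suc M" using assms by (cases N) auto
  then have "\<not> (1/2::real)^M < \<epsilon>" unfolding N_def by (intro not_less_Least) auto
  then have "\<epsilon> / 2 \<le> (1/2::real)^N" unfolding M by simp
  with lt show ?thesis by (intro that[of N]) (simp_all add: M power_one_over)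
qed

lemma error_budget:
  fixes \<epsilon> t :: real
  assumes "0 < \<epsilon>" "\<epsilon> < 1" "\<epsilon> / 2 \<le> t"
  defines "E \<equiv> 5 * (\<epsilon>^2 / 64) / t + 2 * (\<epsilon>^2 / 64) + 2 * (\<epsilon> / 100)"
  shows "\<epsilon>^2 / 64 + E < 1" and "2 * E + \<epsilon>^2 / 64 + \<epsilon> / 100 < \<epsilon>"
proof -
  have sq: "\<epsilon>^2 \<le> \<epsilon>" using assms(1,2) by (simp add: power2_eq_square mult_left_le_one_le)
  have "5 * (\<epsilon>^2 / 64) / t \<le> 5 * (\<epsilon>^2 / 64) / (\<epsilon> / 2)"
    using assms(1,3) by (intro divide_left_mono) auto
  also have "\<dots> = 10 * \<epsilon> / 64" using assms(1) by (simp add: power2_eq_square field_simps)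
  finally have "E \<le> 12 * \<epsilon> / 64 + \<epsilon> / 50" unfolding E_def using sq by linarith
  then show "\<epsilon>^2 / 64 + E < 1" and "2 * E + \<epsilon>^2 / 64 + \<epsilon> / 100 < \<epsilon>"
    using sq assms(1,2) by linarith+
qed

theorem mainTheorem3:
  fixes \<epsilon> :: real and \<mu> :: "(real \<times> real \<Rightarrow> real) \<Rightarrow> real"
  assumes "0 < \<epsilon>" and "\<epsilon> < 1"
    and "\<mu> \<in> FreeSp" and "fnorm \<mu> \<le> 1"
    and "fnorm (\<lambda>f. mol (0, 0) (1, 0) f + \<mu> f) < 1 + \<epsilon>^2 / 64"
    and "fnorm (\<lambda>f. mol (0, 0) (1, 0) f - \<mu> f) < 1 + \<epsilon>^2 / 64"
    and "fnorm \<mu> > 1 - \<epsilon>^2 / 64"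
  shows "\<exists>\<delta>>0. \<exists>\<nu>\<in>convF (Mol \<delta> \<epsilon>). fnorm (\<lambda>f. \<mu> f - \<nu> f) < \<epsilon>"
proof -
  have "\<epsilon>^2 < 1" using assms(1,2) by (simp add: power_less_one_iff)
  then have bounded: "ball_bounded \<mu>" using FreeSp_ball_bounded[OF assms(3)] assms(7) by simp
  have peak: "\<bar>\<mu> g\<bar> \<le> \<epsilon>^2 / 64" if g: "g \<in> Lip0_ball" "g (1, 0) = -1" for g
  proof -
    have "mol (0, 0) (1, 0) g = 1" using g Lip0_ball_origin mol_origin_one_zero by simp
    from abs_lt_of_fnorm_add_diff_lt[OF ball_bounded_mol_origin_one_zero bounded g(1) this
        assms(5,6)]
    show ?thesis by simp
  qed
  obtain N :: nat where N: "1 \<le> N" "\<epsilon> / 2 \<le> 1 / 2^N" "1 / 2^N < \<epsilon>"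
    using exists_dyadic_between[OF assms(1,2)] .
  have e: "0 < \<epsilon> / 100" using assms(1) by simp
  obtain s Z \<psi> where s: "0 < s" and Z: "finite Z" "Z \<noteq> {}" "Z \<subseteq> Mset"
    and band: "\<forall>z\<in>Z. s \<le> snd z \<and> snd z \<le> 1 / 2^N" and \<psi>: "\<psi> \<in> mol_span Z"
    and approx: "\<forall>f\<in>Lip0_ball. \<bar>\<mu> f - \<psi> f\<bar> \<le> 5 * (\<epsilon>^2/64) / (1 / 2^N) + 2 * (\<epsilon>^2/64) + 2 * (\<epsilon>/100)"
    by (rule band_approx[OF assms(3) bounded peak N(1) refl e])
  have "\<And>z. z \<in> Z \<Longrightarrow> s / 2 < snd z \<and> snd z < \<epsilon>" using band s N(3) by fastforce
  from near_convF_Mol[OF bounded assms(4,7) Z this \<psi> approx[rule_format]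
      error_budget(1)[OF assms(1,2) N(2)] e]
  obtain \<nu> where "\<nu> \<in> convF (Mol (s/2) \<epsilon>)" and "fnorm (\<lambda>f. \<mu> f - \<nu> f)
      \<le> 2 * (5 * (\<epsilon>^2/64) / (1 / 2^N) + 2 * (\<epsilon>^2/64) + 2 * (\<epsilon>/100)) + \<epsilon>^2/64 + \<epsilon>/100"
    by blast
  moreover from this(2) error_budget(2)[OF assms(1,2) N(2)] have "fnorm (\<lambda>f. \<mu> f - \<nu> f) < \<epsilon>"
    by (rule order.strict_trans1)
  ultimately show ?thesis using s by (intro exI[where x = "s/2"]) auto
qed

end
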